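(* Let $A$ be a commutative ring, $\mathbf f=(f_1,f_2):\{1,\dots,m\}\to\mathbb N^2$ with $f_1\equiv1$, and $M$ a finitely generated bigraded $A[\mathbf f]$-module whose homogeneous components $M_{n,d}$ are all $A$-modules of finite length. Then there exist an integer $h\ge0$ and Laurent polynomials $I_\alpha\in\mathbb Z[X,Y,X^{-1},Y^{-1}]$, indexed by subsets $\alpha\subseteq\{1,\dots,m\}$ with $\#\alpha\le h$, such that $$P_M(X,Y)=\sum_{r=0}^h\sum_{\#\alpha=r}I_\alpha(X,Y)\prod_{i\in\alpha}(1-XY^{f_2(i)})^{-1},$$ the coefficients of $I_\alpha$ are nonnegative whenever $\#\alpha=h$, and, if $M\ne0$, $I_\alpha\neq0$ for at least one $\alpha$ with $\#\alpha=h$.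
   Context: $A[\mathbf f]$ is the polynomial ring $A[T_1,\dots,T_m]$ with the $\mathbb N^2$-grading in which $T_i$ is homogeneous of bidegree $\mathbf f(i)$. A bigraded $A[\mathbf f]$-module is an $A[\mathbf f]$-module $M=\bigoplus_{(n,d)\in\mathbb Z^2}M_{n,d}$ with $A[\mathbf f]_{(n,d)}M_{(n',d')}\subseteq M_{(n+n',d+d')}$. Its Poincaré series is $P_M=\sum_{(n,d)\in\mathbb Z^2}\mathrm{len}_A(M_{n,d})X^nY^d\in\mathbb Z[[X,Y]][X^{-1},Y^{-1}]$, and $(1-XY^e)^{-1}=\sum_{k\ge0}X^kY^{ke}$. *)

theory Defs
  imports Complex_Main
begin

section \<open>Modules over A[f] = A[T_1,...,T_m] (A-module with m commuting A-linear endomorphisms)\<close>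

definition poly_module ::
  "('a::comm_ring_1 \<Rightarrow> 'b::ab_group_add \<Rightarrow> 'b) \<Rightarrow> nat \<Rightarrow> (nat \<Rightarrow> 'b \<Rightarrow> 'b) \<Rightarrow> bool" where
  "poly_module smul m T \<longleftrightarrow> module smul \<and>
     (\<forall>i\<in>{1..m}. \<forall>x y. T i (x + y) = T i x + T i y) \<and>
     (\<forall>i\<in>{1..m}. \<forall>a x. T i (smul a x) = smul a (T i x)) \<and>
     (\<forall>i\<in>{1..m}. \<forall>j\<in>{1..m}. \<forall>x. T i (T j x) = T j (T i x))"

inductive_set gen_submod ::
  "('a::comm_ring_1 \<Rightarrow> 'b::ab_group_add \<Rightarrow> 'b) \<Rightarrow> nat \<Rightarrow> (nat \<Rightarrow> 'b \<Rightarrow> 'b) \<Rightarrow> 'b set \<Rightarrow> 'b set"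
  for smul m T S where
  gen_base: "x \<in> S \<Longrightarrow> x \<in> gen_submod smul m T S"
| gen_zero: "0 \<in> gen_submod smul m T S"
| gen_add: "x \<in> gen_submod smul m T S \<Longrightarrow> y \<in> gen_submod smul m T S \<Longrightarrow> x + y \<in> gen_submod smul m T S"
| gen_smul: "x \<in> gen_submod smul m T S \<Longrightarrow> smul a x \<in> gen_submod smul m T S"
| gen_T: "i \<in> {1..m} \<Longrightarrow> x \<in> gen_submod smul m T S \<Longrightarrow> T i x \<in> gen_submod smul m T S"

definition finitely_generated ::
  "('a::comm_ring_1 \<Rightarrow> 'b::ab_group_add \<Rightarrow> 'b) \<Rightarrow> nat \<Rightarrow> (nat \<Rightarrow> 'b \<Rightarrow> 'b) \<Rightarrow> bool" where
  "finitely_generated smul m T \<longleftrightarrow> (\<exists>S. finite S \<and> gen_submod smul m T S = UNIV)"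

text \<open>Bigrading M = (direct sum) of the A-submodules G (n,d), with T_i of bidegree (1, f2 i).\<close>
definition bigraded ::
  "('a::comm_ring_1 \<Rightarrow> 'b::ab_group_add \<Rightarrow> 'b) \<Rightarrow> nat \<Rightarrow> (nat \<Rightarrow> 'b \<Rightarrow> 'b) \<Rightarrow> (nat \<Rightarrow> nat)
     \<Rightarrow> (int \<times> int \<Rightarrow> 'b set) \<Rightarrow> bool" where
  "bigraded smul m T f2 G \<longleftrightarrow>
     (\<forall>p. module.subspace smul (G p)) \<and>
     (\<forall>x. \<exists>!c :: int \<times> int \<Rightarrow> 'b. finite {p. c p \<noteq> 0} \<and> (\<forall>p. c p \<in> G p) \<and>
              x = (\<Sum>p\<in>{p. c p \<noteq> 0}. c p)) \<and>
     (\<forall>i\<in>{1..m}. \<forall>n d. \<forall>x\<in>G (n, d). T i x \<in> G (n + 1, d + int (f2 i)))"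

definition submod_chain ::
  "('a::comm_ring_1 \<Rightarrow> 'b::ab_group_add \<Rightarrow> 'b) \<Rightarrow> 'b set \<Rightarrow> nat \<Rightarrow> bool" where
  "submod_chain smul N k \<longleftrightarrow> (\<exists>C :: nat \<Rightarrow> 'b set.
      C 0 = {0} \<and> C k = N \<and> (\<forall>i<k. C i \<subset> C (Suc i)) \<and> (\<forall>i\<le>k. module.subspace smul (C i)))"

definition finite_length ::
  "('a::comm_ring_1 \<Rightarrow> 'b::ab_group_add \<Rightarrow> 'b) \<Rightarrow> 'b set \<Rightarrow> bool" where
  "finite_length smul N \<longleftrightarrow> (\<exists>B. \<forall>k. submod_chain smul N k \<longrightarrow> k \<le> B)"

definition mod_length ::
  "('a::comm_ring_1 \<Rightarrow> 'b::ab_group_add \<Rightarrow> 'b) \<Rightarrow> 'b set \<Rightarrow> nat" where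
  "mod_length smul N = Max {k. submod_chain smul N k}"

section \<open>Bivariate formal Laurent series Z[[X,Y]][X^-1,Y^-1] as coefficient functions\<close>

type_synonym lseries = "int \<times> int \<Rightarrow> int"

definition poincare_series ::
  "('a::comm_ring_1 \<Rightarrow> 'b::ab_group_add \<Rightarrow> 'b) \<Rightarrow> (int \<times> int \<Rightarrow> 'b set) \<Rightarrow> lseries" where
  "poincare_series smul G = (\<lambda>p. int (mod_length smul (G p)))"

text \<open>Cauchy product (well defined for series with supports bounded below / finite).\<close>
definition ls_mult :: "lseries \<Rightarrow> lseries \<Rightarrow> lseries" where
  "ls_mult f g = (\<lambda>(n, d). \<Sum>p\<in>{p. f p \<noteq> 0 \<and> g (n - fst p, d - snd p) \<noteq> 0}.
                          f p * g (n - fst p, d - snd p))"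

definition ls_one :: lseries where
  "ls_one = (\<lambda>(n, d). if n = 0 \<and> d = 0 then 1 else 0)"

text \<open>(1 - X Y^e)^-1 = sum_k X^k Y^(k e)\<close>
definition geom :: "nat \<Rightarrow> lseries" where
  "geom e = (\<lambda>(n, d). if n \<ge> 0 \<and> d = n * int e then 1 else 0)"

text \<open>prod over i in alpha of (1 - X Y^(f2 i))^-1\<close>
definition geom_prod :: "(nat \<Rightarrow> nat) \<Rightarrow> nat set \<Rightarrow> lseries" where
  "geom_prod f2 \<alpha> = foldr ls_mult (map (\<lambda>i. geom (f2 i)) (sorted_list_of_set \<alpha>)) ls_one"

end

theory Submission
  imports Defs
begin

text \<open>
  Pick finitely many homogeneous generators h_1, ..., h_s of M.  Each component
  M_p is spanned over A by the labelled monomials T^a h_j of bidegree p.  Ordering the labels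
  (j, a) by j and then lexicographically in a gives a filtration of M_p with cyclic layers, so
  len M_p is the sum of the layer lengths \<lambda>(j, a).  Multiplication by a variable T_i maps the
  layer of (j, a) onto a subquotient of the layer of (j, a + e_i), hence \<lambda>(j, -) is antitone
  and every level set {a. t \<le> \<lambda>(j, a)} is a down-set of \<nat>^m.  By Dickson's lemma such a
  down-set is a finite disjoint union of cones c + \<nat>^B (a Stanley decomposition), and the
  lattice points of a cone, counted by bidegree, have the generating series
  X^|c| Y^w(c) \<Prod>_(i \<in> B) (1 - X Y^f2(i))^-1.  So P_M is a finite sum of such shifted products,
  each with coefficient 1; grouping them by their variable sets gives the theorem, with h the
  largest number of free directions of a cone.
\<close>

section \<open>Lengths of relative chains of submodules\<close>

text \<open>A strict chain \<open>L = C\<^sub>0 \<subset> \<dots> \<subset> C\<^sub>k = U\<close> of submodules has length \<open>k\<close>; the length of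
  \<open>U/L\<close> is the maximal such \<open>k\<close>.  Lengths of quotients are needed to handle filtrations.\<close>
definition rel_chain :: "('a::comm_ring_1 \<Rightarrow> 'b::ab_group_add \<Rightarrow> 'b) \<Rightarrow> 'b set \<Rightarrow> 'b set \<Rightarrow> nat \<Rightarrow> bool" where
  "rel_chain smul L U k \<longleftrightarrow> (\<exists>C :: nat \<Rightarrow> 'b set.
      C 0 = L \<and> C k = U \<and> (\<forall>i<k. C i \<subset> C (Suc i)) \<and> (\<forall>i\<le>k. module.subspace smul (C i)))"

definition rel_finite_len :: "('a::comm_ring_1 \<Rightarrow> 'b::ab_group_add \<Rightarrow> 'b) \<Rightarrow> 'b set \<Rightarrow> 'b set \<Rightarrow> bool" where
  "rel_finite_len smul L U \<longleftrightarrow> (\<exists>B. \<forall>k. rel_chain smul L U k \<longrightarrow> k \<le> B)"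

definition rel_len :: "('a::comm_ring_1 \<Rightarrow> 'b::ab_group_add \<Rightarrow> 'b) \<Rightarrow> 'b set \<Rightarrow> 'b set \<Rightarrow> nat" where
  "rel_len smul L U = Max {k. rel_chain smul L U k}"

lemma mod_length_eq_rel_len: "mod_length smul N = rel_len smul {0} N"
  unfolding mod_length_def rel_len_def submod_chain_def rel_chain_def by simp

lemma finite_length_eq_rel_finite_len: "finite_length smul N = rel_finite_len smul {0} N"
  unfolding finite_length_def rel_finite_len_def submod_chain_def rel_chain_def by simp

definition subspace_plus :: "'b::ab_group_add set \<Rightarrow> 'b set \<Rightarrow> 'b set" where
  "subspace_plus A B = {x + y | x y. x \<in> A \<and> y \<in> B}"

lemma strict_chain_mono:
  assumes "\<forall>i<k. C i \<subset> C (Suc i)" "i \<le> j" "j \<le> k"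
  shows "C i \<subseteq> C j"
  using assms(2,3)
proof (induction j)
  case (Suc j)
  show ?case
  proof (cases "i = Suc j")
    case False
    then have "C i \<subseteq> C j" using Suc by simp
    moreover have "C j \<subset> C (Suc j)" using assms(1) Suc.prems by simp
    ultimately show ?thesis by blast
  qed simp
qed simp

context module
begin

lemma rel_chain_refl: "subspace L \<Longrightarrow> rel_chain scale L L 0"
  unfolding rel_chain_def by (rule exI[of _ "\<lambda>_. L"]) auto

lemma rel_chain_step: "subspace L \<Longrightarrow> subspace U \<Longrightarrow> L \<subset> U \<Longrightarrow> rel_chain scale L U 1"
  unfolding rel_chain_def by (rule exI[of _ "\<lambda>i. if i = 0 then L else U"]) (auto simp: le_Suc_eq)

lemma rel_chain_exists: "subspace L \<Longrightarrow> subspace U \<Longrightarrow> L \<subseteq> U \<Longrightarrow> \<exists>k. rel_chain scale L U k"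
  by (cases "L = U") (auto intro: rel_chain_refl rel_chain_step)

lemma rel_chain_same_ends: "rel_chain scale L L k \<Longrightarrow> k = 0"
proof (rule ccontr)
  assume "rel_chain scale L L k" "k \<noteq> 0"
  then obtain C where C: "C 0 = L" "C k = L" "\<forall>i<k. C i \<subset> C (Suc i)"
    unfolding rel_chain_def by blast
  have "C 1 \<subseteq> C k" using strict_chain_mono[OF C(3)] \<open>k \<noteq> 0\<close> by simp
  moreover have "C 0 \<subset> C 1" using C(3) \<open>k \<noteq> 0\<close> by simp
  ultimately show False using C by blast
qed

lemma rel_chain_append:
  assumes "rel_chain scale L U k" "rel_chain scale U V l"
  shows "rel_chain scale L V (k + l)"
proof -
  obtain C where C: "C 0 = L" "C k = U" "\<forall>i<k. C i \<subset> C (Suc i)" "\<forall>i\<le>k. subspace (C i)"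
    using assms(1) unfolding rel_chain_def by blast
  obtain D where D: "D 0 = U" "D l = V" "\<forall>i<l. D i \<subset> D (Suc i)" "\<forall>i\<le>l. subspace (D i)"
    using assms(2) unfolding rel_chain_def by blast
  show ?thesis unfolding rel_chain_def
  proof (rule exI[of _ "\<lambda>i. if i \<le> k then C i else D (i - k)"], intro conjI allI impI)
    fix i assume i: "i < k + l"
    show "(if i \<le> k then C i else D (i - k)) \<subset> (if Suc i \<le> k then C (Suc i) else D (Suc i - k))"
    proof (cases "Suc i \<le> k")
      case True then show ?thesis using C(3) by auto
    next
      case False
      then consider "i = k" | "i > k" by linarith
      then show ?thesis
      proof cases
        case 1
        then show ?thesis using i C(2) D(1) D(3) by auto
      next
        case 2
        then have "i - k < l" "Suc i - k = Suc (i - k)" using i by auto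
        then show ?thesis using D(3) 2 by auto
      qed
    qed
  next
    fix i assume "i \<le> k + l"
    then show "subspace (if i \<le> k then C i else D (i - k))" using C D by auto
  qed (use C D in auto)
qed

lemma rel_len_ge: "rel_finite_len scale L U \<Longrightarrow> rel_chain scale L U k \<Longrightarrow> k \<le> rel_len scale L U"
  unfolding rel_finite_len_def rel_len_def
  by (rule Max_ge) (auto intro: finite_subset[of _ "{..B}" for B])

lemma rel_len_chain:
  assumes "rel_finite_len scale L U" "subspace L" "subspace U" "L \<subseteq> U"
  shows "rel_chain scale L U (rel_len scale L U)"
proof -
  have "finite {k. rel_chain scale L U k}" using assms(1) unfolding rel_finite_len_def
    by (auto intro: finite_subset[of _ "{..B}" for B])
  moreover have "{k. rel_chain scale L U k} \<noteq> {}" using rel_chain_exists[OF assms(2-4)] by auto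
  ultimately show ?thesis unfolding rel_len_def using Max_in by blast
qed

lemma rel_len_refl: "subspace L \<Longrightarrow> rel_len scale L L = 0"
proof -
  assume "subspace L"
  then have "{k. rel_chain scale L L k} = {0}" using rel_chain_same_ends rel_chain_refl by blast
  then show ?thesis unfolding rel_len_def by simp
qed

lemma rel_len_nonzero:
  assumes "subspace N" "N \<noteq> {0}" "rel_finite_len scale {0} N"
  shows "1 \<le> rel_len scale {0} N"
proof -
  have "{0} \<subset> N" using assms(1,2) subspace_0 by blast
  then have "rel_chain scale {0} N 1" using assms(1) by (intro rel_chain_step) simp_all
  then show ?thesis using rel_len_ge assms(3) by blast
qed

lemma rel_chain_of_weak_chain:
  assumes "\<forall>i<k. D i \<subseteq> D (Suc i)" "\<forall>i\<le>k. subspace (D i)"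
  shows "rel_chain scale (D 0) (D k) (card {i. i < k \<and> D i \<noteq> D (Suc i)})"
  using assms
proof (induction k)
  case 0
  then show ?case by (auto intro: rel_chain_refl)
next
  case (Suc k)
  have IH: "rel_chain scale (D 0) (D k) (card {i. i < k \<and> D i \<noteq> D (Suc i)})"
    using Suc by auto
  show ?case
  proof (cases "D k = D (Suc k)")
    case True
    have "{i. i < Suc k \<and> D i \<noteq> D (Suc i)} = {i. i < k \<and> D i \<noteq> D (Suc i)}"
      using True less_Suc_eq by auto
    then show ?thesis using IH True by simp
  next
    case False
    have "{i. i < Suc k \<and> D i \<noteq> D (Suc i)} = insert k {i. i < k \<and> D i \<noteq> D (Suc i)}"
      using False less_Suc_eq by auto
    then have "card {i. i < Suc k \<and> D i \<noteq> D (Suc i)} = card {i. i < k \<and> D i \<noteq> D (Suc i)} + 1"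
      by simp
    moreover have "rel_chain scale (D k) (D (Suc k)) 1"
      using Suc.prems False by (intro rel_chain_step) auto
    then have "rel_chain scale (D 0) (D (Suc k)) (card {i. i < k \<and> D i \<noteq> D (Suc i)} + 1)"
      by (rule rel_chain_append[OF IH])
    ultimately show ?thesis by simp
  qed
qed

lemma subspace_subspace_plus: "subspace A \<Longrightarrow> subspace B \<Longrightarrow> subspace (subspace_plus A B)"
proof -
  assume A: "subspace A" and B: "subspace B"
  show ?thesis unfolding subspace_def subspace_plus_def
  proof (intro conjI ballI allI)
    show "0 \<in> {x + y |x y. x \<in> A \<and> y \<in> B}"
      using subspace_0[OF A] subspace_0[OF B] by (intro CollectI exI[of _ 0]) simp
  next
    fix u v assume "u \<in> {x + y |x y. x \<in> A \<and> y \<in> B}" "v \<in> {x + y |x y. x \<in> A \<and> y \<in> B}"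
    then obtain x y x' y' where "u = x + y" "x \<in> A" "y \<in> B" "v = x' + y'" "x' \<in> A" "y' \<in> B" by blast
    then show "u + v \<in> {x + y |x y. x \<in> A \<and> y \<in> B}"
      using subspace_add[OF A] subspace_add[OF B]
      by (intro CollectI exI[of _ "x + x'"] exI[of _ "y + y'"]) (simp add: algebra_simps)
  next
    fix c u assume "u \<in> {x + y |x y. x \<in> A \<and> y \<in> B}"
    then obtain x y where "u = x + y" "x \<in> A" "y \<in> B" by blast
    then show "c *s u \<in> {x + y |x y. x \<in> A \<and> y \<in> B}"
      using subspace_scale[OF A] subspace_scale[OF B]
      by (intro CollectI exI[of _ "c *s x"] exI[of _ "c *s y"]) (simp add: scale_right_distrib)
  qed
qed

lemma subspace_plus_absorb:
  assumes "subspace A" "subspace B" "A \<subseteq> B"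
  shows "subspace_plus A B = B" "subspace_plus B A = B"
proof -
  have sum_in: "x + y \<in> B" if "x \<in> B" "y \<in> B" for x y using that subspace_add[OF assms(2)] by blast
  have zero: "0 \<in> A" using subspace_0[OF assms(1)] .
  have "B \<subseteq> subspace_plus A B"
  proof
    fix x assume "x \<in> B"
    then have "0 + x \<in> subspace_plus A B" unfolding subspace_plus_def using zero by blast
    then show "x \<in> subspace_plus A B" by simp
  qed
  moreover have "B \<subseteq> subspace_plus B A"
  proof
    fix x assume "x \<in> B"
    then have "x + 0 \<in> subspace_plus B A" unfolding subspace_plus_def using zero by blast
    then show "x \<in> subspace_plus B A" by simp
  qed
  moreover have "subspace_plus A B \<subseteq> B" "subspace_plus B A \<subseteq> B"
    unfolding subspace_plus_def using sum_in assms(3) by blast+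
  ultimately show "subspace_plus A B = B" "subspace_plus B A = B" by blast+
qed

lemma modular_cancel:
  assumes "subspace C" "subspace C'" "subspace F" "C \<subseteq> C'" "C \<inter> F = C' \<inter> F"
    "subspace_plus C F = subspace_plus C' F"
  shows "C = C'"
proof
  show "C' \<subseteq> C"
  proof
    fix x assume x: "x \<in> C'"
    have "x + 0 \<in> subspace_plus C' F" unfolding subspace_plus_def using x subspace_0[OF assms(3)] by blast
    then have "x \<in> subspace_plus C F" using assms(6) by simp
    then obtain y f where yf: "x = y + f" "y \<in> C" "f \<in> F" unfolding subspace_plus_def by blast
    have "f = x - y" using yf by simp
    moreover have "x - y \<in> C'" using x yf(2) assms(4) subspace_diff[OF assms(2)] by blast
    ultimately have "f \<in> C'" by simp
    then have "f \<in> C" using yf assms(5) by blast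
    then show "x \<in> C" using yf subspace_add[OF assms(1)] by auto
  qed
qed (use assms in auto)

lemma rel_len_ge_inner:
  assumes "rel_finite_len scale L U" "rel_chain scale L' U' k"
    and "subspace L" "subspace U" "subspace L'" "subspace U'" "L \<subseteq> L'" "U' \<subseteq> U"
  shows "k \<le> rel_len scale L U"
proof -
  obtain a where "rel_chain scale L L' a" using rel_chain_exists assms(3,5,7) by blast
  moreover obtain b where "rel_chain scale U' U b" using rel_chain_exists assms(4,6,8) by blast
  ultimately have "rel_chain scale L U (a + k + b)" using rel_chain_append assms(2) by blast
  then show ?thesis using rel_len_ge assms(1) by fastforce
qed

lemma rel_finite_len_mono:
  assumes "rel_finite_len scale L U" "subspace L" "subspace U" "subspace L'" "subspace U'"
    "L \<subseteq> L'" "U' \<subseteq> U"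
  shows "rel_finite_len scale L' U'"
  unfolding rel_finite_len_def using rel_len_ge_inner[OF assms(1) _ assms(2-7)] by blast

text \<open>The hard half of additivity: intersecting and adding a maximal chain of \<open>U/L\<close> with \<open>F\<close>
  gives chains of \<open>F/L\<close> and \<open>U/F\<close>, and by the modular law every step jumps in one of them.\<close>
lemma rel_len_le_sum:
  assumes "rel_finite_len scale L U" "subspace L" "subspace F" "subspace U" "L \<subseteq> F" "F \<subseteq> U"
  shows "rel_len scale L U \<le> rel_len scale L F + rel_len scale F U"
proof -
  have fl1: "rel_finite_len scale L F"
    using rel_finite_len_mono[OF assms(1,2,4,2,3) order_refl assms(6)] .
  have fl2: "rel_finite_len scale F U"
    using rel_finite_len_mono[OF assms(1,2,4,3,4,5) order_refl] .
  define k where "k = rel_len scale L U"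
  obtain C where C: "C 0 = L" "C k = U" "\<forall>i<k. C i \<subset> C (Suc i)" "\<forall>i\<le>k. subspace (C i)"
    using rel_len_chain[OF assms(1,2,4)] assms(5,6) unfolding rel_chain_def k_def by blast
  define D where "D i = C i \<inter> F" for i
  define E where "E i = subspace_plus (C i) F" for i
  define JD where "JD = {i. i < k \<and> D i \<noteq> D (Suc i)}"
  define JE where "JE = {i. i < k \<and> E i \<noteq> E (Suc i)}"
  have "rel_chain scale (D 0) (D k) (card JD)" unfolding JD_def
    by (rule rel_chain_of_weak_chain) (use C assms in \<open>auto simp: D_def intro: subspace_inter\<close>)
  moreover have "D 0 = L" "D k = F" using C assms by (auto simp: D_def)
  ultimately have JD_le: "card JD \<le> rel_len scale L F" using rel_len_ge[OF fl1] by simp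
  have "rel_chain scale (E 0) (E k) (card JE)" unfolding JE_def
  proof (rule rel_chain_of_weak_chain)
    show "\<forall>i<k. E i \<subseteq> E (Suc i)" using C(3) unfolding E_def subspace_plus_def by blast
    show "\<forall>i\<le>k. subspace (E i)" using C(4) assms(3) unfolding E_def by (auto intro: subspace_subspace_plus)
  qed
  moreover have "E 0 = F" "E k = U"
    unfolding E_def C(1,2) using subspace_plus_absorb assms(2-6) by auto
  ultimately have JE_le: "card JE \<le> rel_len scale F U" using rel_len_ge[OF fl2] by simp
  have "{..<k} \<subseteq> JD \<union> JE"
  proof
    fix i assume "i \<in> {..<k}"
    then have i: "i < k" by simp
    have "C i \<noteq> C (Suc i)" using C(3) i by auto
    then have "D i \<noteq> D (Suc i) \<or> E i \<noteq> E (Suc i)"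
      using modular_cancel[of "C i" "C (Suc i)" F] C i assms(3) by (auto simp: D_def E_def)
    then show "i \<in> JD \<union> JE" using i by (auto simp: JD_def JE_def)
  qed
  then have "k \<le> card (JD \<union> JE)"
    using card_mono[of "JD \<union> JE" "{..<k}"] by (simp add: JD_def JE_def)
  also have "\<dots> \<le> card JD + card JE" by (rule card_Un_le)
  finally show ?thesis using JD_le JE_le unfolding k_def by simp
qed

lemma rel_len_additive:
  assumes "rel_finite_len scale L U" "subspace L" "subspace F" "subspace U" "L \<subseteq> F" "F \<subseteq> U"
  shows "rel_len scale L U = rel_len scale L F + rel_len scale F U"
proof (rule antisym)
  have fl1: "rel_finite_len scale L F"
    using rel_finite_len_mono[OF assms(1,2,4,2,3) order_refl assms(6)] .
  have fl2: "rel_finite_len scale F U"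
    using rel_finite_len_mono[OF assms(1,2,4,3,4,5) order_refl] .
  show "rel_len scale L F + rel_len scale F U \<le> rel_len scale L U"
    using rel_len_ge[OF assms(1) rel_chain_append[OF rel_len_chain[OF fl1] rel_len_chain[OF fl2]]]
      assms by auto
qed (rule rel_len_le_sum[OF assms])

end

section \<open>Cyclic extensions and filtrations\<close>

text \<open>It turns chains of \<open>(F' + Av')/F'\<close> into chains of \<open>(F + Av)/F\<close>.\<close>
definition pull_back :: "('a::comm_ring_1 \<Rightarrow> 'b::ab_group_add \<Rightarrow> 'b) \<Rightarrow> 'b set \<Rightarrow> 'b \<Rightarrow> 'b \<Rightarrow> 'b set \<Rightarrow> 'b set" where
  "pull_back smul F v v' W = {f + smul c v | f c. f \<in> F \<and> smul c v' \<in> W}"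

context module
begin

lemma subspace_pull_back:
  assumes F: "subspace F" and W: "subspace W"
  shows "subspace (pull_back scale F v v' W)"
  unfolding subspace_def
proof (intro conjI ballI allI)
  show "0 \<in> pull_back scale F v v' W" unfolding pull_back_def
    using subspace_0[OF F] subspace_0[OF W] by (auto intro!: exI[of _ 0])
next
  fix x y assume "x \<in> pull_back scale F v v' W" "y \<in> pull_back scale F v v' W"
  then obtain f c g d where fc: "x = f + scale c v" "f \<in> F" "scale c v' \<in> W"
      "y = g + scale d v" "g \<in> F" "scale d v' \<in> W"
    unfolding pull_back_def by blast
  have "scale (c + d) v' \<in> W" using fc subspace_add[OF W] by (simp add: scale_left_distrib)
  moreover have "f + g \<in> F" using fc subspace_add[OF F] by simp
  moreover have "x + y = (f + g) + scale (c + d) v" using fc by (simp add: scale_left_distrib algebra_simps)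
  ultimately show "x + y \<in> pull_back scale F v v' W" unfolding pull_back_def by blast
next
  fix e x assume "x \<in> pull_back scale F v v' W"
  then obtain f c where fc: "x = f + scale c v" "f \<in> F" "scale c v' \<in> W"
    unfolding pull_back_def by blast
  have "scale (e * c) v' \<in> W" using fc subspace_scale[OF W, of "scale c v'" e] by simp
  moreover have "scale e f \<in> F" using fc subspace_scale[OF F] by simp
  moreover have "scale e x = scale e f + scale (e * c) v" using fc by (simp add: scale_right_distrib)
  ultimately show "scale e x \<in> pull_back scale F v v' W" unfolding pull_back_def by blast
qed

lemma pull_back_lower: "subspace W \<Longrightarrow> F \<subseteq> pull_back scale F v v' W"
  unfolding pull_back_def using subspace_0 by (force intro: exI[of _ 0])

lemma pull_back_mono: "W1 \<subseteq> W2 \<Longrightarrow> pull_back scale F v v' W1 \<subseteq> pull_back scale F v v' W2"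
  unfolding pull_back_def by blast

lemma pull_back_top:
  assumes "subspace F" "subspace F'"
  shows "pull_back scale F v v' (span (insert v' F')) = span (insert v F)"
proof -
  have Fu: "span (insert v F) = {x. \<exists>k. x - scale k v \<in> F}"
    unfolding span_insert span_eq_iff[THEN iffD2, OF assms(1)] ..
  have in_span: "scale k v' \<in> span (insert v' F')" for k
    by (intro span_scale span_base) simp
  show ?thesis unfolding Fu pull_back_def
  proof safe
    fix f c assume "f \<in> F"
    then show "\<exists>k. f + scale c v - scale k v \<in> F" by (intro exI[of _ c]) simp
  next
    fix x k assume "x - scale k v \<in> F"
    then show "\<exists>f c. x = f + scale c v \<and> f \<in> F \<and> scale c v' \<in> span (insert v' F')"
      using in_span by (intro exI[of _ "x - scale k v"] exI[of _ k]) simp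
  qed
qed

lemma pull_back_strict:
  assumes \<tau>_scale: "\<And>c x. \<tau> (scale c x) = scale c (\<tau> x)"
    and F: "subspace F" and F': "subspace F'" and \<tau>_F: "\<And>x. x \<in> F \<Longrightarrow> \<tau> x \<in> F'" and \<tau>_v: "\<tau> v = v'"
    and W: "subspace W1" "subspace W2" "W1 \<subset> W2" "F' \<subseteq> W1" "W2 \<subseteq> span (insert v' F')"
  shows "pull_back scale F v v' W1 \<noteq> pull_back scale F v v' W2"
proof
  assume eq: "pull_back scale F v v' W1 = pull_back scale F v v' W2"
  have Fu': "span (insert v' F') = {x. \<exists>k. x - scale k v' \<in> F'}"
    unfolding span_insert span_eq_iff[THEN iffD2, OF F'] ..
  have "W2 \<subseteq> W1"
  proof
    fix w assume w: "w \<in> W2"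
    then obtain c where c: "w - scale c v' \<in> F'" using W(5) unfolding Fu' by blast
    have "scale c v' = w - (w - scale c v')" by simp
    also have "\<dots> \<in> W2" using w c W(3,4) subspace_diff[OF W(2)] by blast
    finally have "0 + scale c v \<in> pull_back scale F v v' W2"
      unfolding pull_back_def using subspace_0[OF F] by blast
    then have "scale c v \<in> pull_back scale F v v' W1" using eq by simp
    then obtain f c1 where fc: "scale c v = f + scale c1 v" "f \<in> F" "scale c1 v' \<in> W1"
      unfolding pull_back_def by blast
    have "scale (c - c1) v = f" using fc(1) by (simp add: scale_left_diff_distrib)
    then have "scale (c - c1) v' = \<tau> f" using \<tau>_scale \<tau>_v by metis
    then have "scale (c - c1) v' \<in> W1" using \<tau>_F[OF fc(2)] W(4) by auto
    then have cW1: "scale c v' \<in> W1"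
      using fc(3) subspace_add[OF W(1)] by (fastforce simp: scale_left_diff_distrib)
    have "w = (w - scale c v') + scale c v'" by simp
    also have "\<dots> \<in> W1" using cW1 c W(4) subspace_add[OF W(1)] by blast
    finally show "w \<in> W1" .
  qed
  then show False using W(3) by blast
qed

lemma span_insert_span: "span (insert a (span B)) = span (insert a B)"
  unfolding span_insert span_span ..

text \<open>Consequently the length of the cyclic extension \<open>(F' + Av')/F'\<close> is bounded by that of
  \<open>(F + Av)/F\<close>.  This is why multiplication by a variable can only shorten the layers.\<close>
lemma rel_len_shift:
  assumes \<tau>_scale: "\<And>c x. \<tau> (scale c x) = scale c (\<tau> x)"
    and F: "subspace F" and F': "subspace F'" and \<tau>_F: "\<And>x. x \<in> F \<Longrightarrow> \<tau> x \<in> F'" and \<tau>_v: "\<tau> v = v'"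
    and fl: "rel_finite_len scale F (span (insert v F))"
    and ch: "rel_chain scale F' (span (insert v' F')) r"
  shows "r \<le> rel_len scale F (span (insert v F))"
proof -
  let ?pb = "pull_back scale F v v'"
  obtain C where C: "C 0 = F'" "C r = span (insert v' F')" "\<forall>i<r. C i \<subset> C (Suc i)"
      "\<forall>i\<le>r. subspace (C i)"
    using ch unfolding rel_chain_def by blast
  have C_between: "F' \<subseteq> C i \<and> C i \<subseteq> span (insert v' F')" if "i \<le> r" for i
    using strict_chain_mono[OF C(3), of 0 i] strict_chain_mono[OF C(3), of i r] that C(1,2) by simp
  have "rel_chain scale (?pb (C 0)) (span (insert v F)) r" unfolding rel_chain_def
  proof (intro exI[of _ "\<lambda>i. ?pb (C i)"] conjI allI impI)
    show "?pb (C r) = span (insert v F)" using C(2) pull_back_top[OF F F'] by simp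
  next
    fix i assume i: "i < r"
    have "?pb (C i) \<subseteq> ?pb (C (Suc i))" using pull_back_mono C(3) i by blast
    moreover have "?pb (C i) \<noteq> ?pb (C (Suc i))"
      by (rule pull_back_strict[OF \<tau>_scale F F' \<tau>_F \<tau>_v]) (use C(3,4) C_between i in auto)
    ultimately show "?pb (C i) \<subset> ?pb (C (Suc i))" by blast
  next
    fix i assume "i \<le> r" then show "subspace (?pb (C i))" using subspace_pull_back F C(4) by blast
  qed simp
  moreover obtain a0 where "rel_chain scale F (?pb (C 0)) a0"
    using rel_chain_exists[OF F subspace_pull_back pull_back_lower] F C(4) by blast
  ultimately have "a0 + r \<le> rel_len scale F (span (insert v F))"
    using rel_chain_append rel_len_ge[OF fl] by blast
  then show ?thesis by simp
qed

end

lemma finite_total_has_max: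
  assumes "finite Q" "Q \<noteq> {}" "\<And>x y z. R x y \<Longrightarrow> R y z \<Longrightarrow> R x z"
    "\<And>x y. x \<in> Q \<Longrightarrow> y \<in> Q \<Longrightarrow> x \<noteq> y \<Longrightarrow> R x y \<or> R y x"
  shows "\<exists>q\<in>Q. \<forall>x\<in>Q. x \<noteq> q \<longrightarrow> R x q"
  using assms
proof (induction Q rule: finite_ne_induct)
  case (singleton x)
  then show ?case by auto
next
  case (insert x F)
  obtain q where q: "q \<in> F" "\<forall>y\<in>F. y \<noteq> q \<longrightarrow> R y q"
    using insert.IH insert.prems by blast
  show ?case
  proof (cases "R q x")
    case True
    show ?thesis
    proof (intro bexI[of _ x] ballI impI)
      fix y assume "y \<in> insert x F" "y \<noteq> x"
      then have "y \<in> F" by simp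
      then show "R y x" using q True insert.prems(1) by (cases "y = q") blast+
    qed simp
  next
    case False
    have "x \<noteq> q" using q(1) insert.hyps by auto
    then have "R x q" using insert.prems(2)[of x q] q(1) False by auto
    then show ?thesis using q by auto
  qed
qed

context module
begin

lemma rel_len_filtration_sum:
  fixes R :: "'c \<Rightarrow> 'c \<Rightarrow> bool" and v :: "'c \<Rightarrow> 'b"
  assumes "finite Q" "\<And>x. \<not> R x x" "\<And>x y z. R x y \<Longrightarrow> R y z \<Longrightarrow> R x z"
    "\<And>x y. x \<in> Q \<Longrightarrow> y \<in> Q \<Longrightarrow> x \<noteq> y \<Longrightarrow> R x y \<or> R y x"
    "rel_finite_len scale {0} (span (v ` Q))"
  shows "rel_len scale {0} (span (v ` Q)) =
    (\<Sum>q\<in>Q. rel_len scale (span (v ` {x\<in>Q. R x q})) (span (v ` {x\<in>Q. R x q \<or> x = q})))"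
  using assms
proof (induction "card Q" arbitrary: Q)
  case 0
  then have "Q = {}" by simp
  then show ?case using rel_len_refl[of "{0}"] by simp
next
  case (Suc n)
  then have Qne: "Q \<noteq> {}" by auto
  obtain qm where qm: "qm \<in> Q" "\<forall>x\<in>Q. x \<noteq> qm \<longrightarrow> R x qm"
    using finite_total_has_max[OF Suc.prems(1) Qne, of R] Suc.prems(3,4) by blast
  define Q' where "Q' = Q - {qm}"
  have cQ': "n = card Q'" using Suc.hyps(2) qm(1) Suc.prems(1) by (simp add: Q'_def)
  have fQ': "finite Q'" using Suc.prems(1) by (simp add: Q'_def)
  have sub: "span (v ` Q') \<subseteq> span (v ` Q)" by (rule span_mono) (auto simp: Q'_def)
  have fl': "rel_finite_len scale {0} (span (v ` Q'))"
    by (rule rel_finite_len_mono[OF Suc.prems(5)]) (use sub span_zero in auto)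
  have IH: "rel_len scale {0} (span (v ` Q')) =
    (\<Sum>q\<in>Q'. rel_len scale (span (v ` {x\<in>Q'. R x q})) (span (v ` {x\<in>Q'. R x q \<or> x = q})))"
    by (rule Suc.hyps(1)[OF cQ' fQ']) (use Suc.prems fl' in \<open>auto simp: Q'_def\<close>)
  have below_q: "{x\<in>Q. R x q} = {x\<in>Q'. R x q}" "{x\<in>Q. R x q \<or> x = q} = {x\<in>Q'. R x q \<or> x = q}"
    if "q \<in> Q'" for q
  proof -
    have "\<not> R qm q" using that qm Suc.prems(2,3) unfolding Q'_def by blast
    then show "{x\<in>Q. R x q} = {x\<in>Q'. R x q}" "{x\<in>Q. R x q \<or> x = q} = {x\<in>Q'. R x q \<or> x = q}"
      using that unfolding Q'_def by auto
  qed
  have below_qm: "{x\<in>Q. R x qm} = Q'" "{x\<in>Q. R x qm \<or> x = qm} = Q"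
    using qm Suc.prems(2) unfolding Q'_def by auto
  have "rel_len scale {0} (span (v ` Q)) =
      rel_len scale {0} (span (v ` Q')) + rel_len scale (span (v ` Q')) (span (v ` Q))"
    by (rule rel_len_additive[OF Suc.prems(5)]) (use sub span_zero in auto)
  also have "\<dots> = (\<Sum>q\<in>Q'. rel_len scale (span (v ` {x\<in>Q. R x q})) (span (v ` {x\<in>Q. R x q \<or> x = q})))
      + rel_len scale (span (v ` {x\<in>Q. R x qm})) (span (v ` {x\<in>Q. R x qm \<or> x = qm}))"
    unfolding IH below_qm by (simp add: below_q cong: sum.cong)
  also have "\<dots> = (\<Sum>q\<in>Q. rel_len scale (span (v ` {x\<in>Q. R x q})) (span (v ` {x\<in>Q. R x q \<or> x = q})))"
    unfolding Q'_def by (simp add: sum.remove[OF Suc.prems(1) qm(1)] add.commute)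
  finally show ?case .
qed

end

section \<open>Dickson's lemma and Stanley decompositions of down-sets in \<open>\<nat>^n\<close>\<close>

text \<open>Exponent vectors in \<open>\<nat>^n\<close> are lists of length \<open>n\<close>, ordered componentwise.\<close>
definition pw_le :: "nat list \<Rightarrow> nat list \<Rightarrow> bool" where
  "pw_le xs ys = list_all2 (\<le>) xs ys"

lemma pw_le_Cons[simp]: "pw_le (x#xs) (y#ys) \<longleftrightarrow> x \<le> y \<and> pw_le xs ys"
  by (simp add: pw_le_def)

lemma pw_le_Nil[simp]: "pw_le [] ys \<longleftrightarrow> ys = []" "pw_le xs [] \<longleftrightarrow> xs = []"
  by (auto simp: pw_le_def)

lemma pw_le_refl[simp]: "pw_le xs xs"
  by (simp add: pw_le_def list_all2_refl)

lemma pw_le_length: "pw_le xs ys \<Longrightarrow> length xs = length ys"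
  by (simp add: pw_le_def list_all2_lengthD)

lemma sum_list_incr: "k < length xs \<Longrightarrow> sum_list (xs[k := xs ! k + 1]) = sum_list xs + (1::nat)"
  by (induction xs arbitrary: k) (auto split: nat.splits)

lemma pw_le_step_down:
  assumes "pw_le a b" "a \<noteq> b"
  shows "\<exists>k b0. k < length b0 \<and> pw_le a b0 \<and> b = b0[k := b0 ! k + 1] \<and> sum_list b0 < sum_list b"
proof -
  have len: "length a = length b" using assms(1) by (rule pw_le_length)
  obtain k where k: "k < length a" "a ! k < b ! k"
    using assms unfolding pw_le_def list_all2_conv_all_nth by (metis le_neq_implies_less nth_equalityI)
  define b0 where "b0 = b[k := b ! k - 1]"
  have "pw_le a b0"
    using assms(1) k len unfolding b0_def pw_le_def list_all2_conv_all_nth by (auto simp: nth_list_update)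
  moreover have "b = b0[k := b0 ! k + 1]" using k len by (simp add: b0_def)
  moreover have "k < length b0" using k len by (simp add: b0_def)
  moreover from calculation have "sum_list b0 < sum_list b" using sum_list_incr[of k b0] by simp
  ultimately show ?thesis by blast
qed

definition upset :: "nat list set \<Rightarrow> bool" where
  "upset U \<longleftrightarrow> (\<forall>a b. a \<in> U \<longrightarrow> pw_le a b \<longrightarrow> b \<in> U)"

definition downset :: "nat list set \<Rightarrow> bool" where
  "downset D \<longleftrightarrow> (\<forall>a b. b \<in> D \<longrightarrow> pw_le a b \<longrightarrow> a \<in> D)"

definition finitely_based :: "nat list set \<Rightarrow> bool" where
  "finitely_based U \<longleftrightarrow> (\<exists>G. finite G \<and> G \<subseteq> U \<and> U = {b. \<exists>g\<in>G. pw_le g b})"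

lemma upset_chain_stabilises_if_based:
  assumes ups: "\<And>k. upset (U k)" and incr: "\<And>k. U k \<subseteq> U (Suc k)"
    and based: "finitely_based (\<Union>k. U k)"
  shows "\<exists>K. \<forall>k\<ge>K. U k = U K"
proof -
  have mono: "k \<le> k' \<Longrightarrow> U k \<subseteq> U k'" for k k'
    using incr by (rule lift_Suc_mono_le)
  obtain G where G: "finite G" "G \<subseteq> (\<Union>k. U k)" "(\<Union>k. U k) = {b. \<exists>g\<in>G. pw_le g b}"
    using based unfolding finitely_based_def by blast
  have "\<forall>g\<in>G. \<exists>k. g \<in> U k" using G(2) by blast
  then obtain kg where kg: "\<forall>g\<in>G. g \<in> U (kg g)" by (rule bchoice[elim_format]) blast
  define K where "K = Max (insert 0 (kg ` G))"
  have "(\<Union>k. U k) \<subseteq> U K"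
  proof
    fix b assume "b \<in> (\<Union>k. U k)"
    then obtain g where g: "g \<in> G" "pw_le g b" using G(3) by blast
    have "kg g \<le> K" unfolding K_def using G(1) g(1) by (intro Max_ge) auto
    then have "g \<in> U K" using mono kg g(1) by blast
    then show "b \<in> U K" using ups[of K] g(2) unfolding upset_def by blast
  qed
  then have "\<forall>k\<ge>K. U k = U K" using mono by blast
  then show ?thesis by blast
qed

text \<open>An up-set of \<open>\<nat>^(n+1)\<close> is finitely based if its slices \<open>S k = {y. k # y \<in> U}\<close> are and
  they are constant from some \<open>K\<close> on: the bases of \<open>S 0, \<dots>, S K\<close>, prefixed by \<open>k\<close>, form a basis.\<close>
lemma finitely_based_of_slices:
  assumes U: "U \<subseteq> {a. length a = Suc n}" "upset U"
    and based: "\<And>k. finitely_based {y. k # y \<in> U}"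
    and K: "\<forall>k\<ge>K. {y. k # y \<in> U} = {y. K # y \<in> U}"
  shows "finitely_based U"
proof -
  define S where "S k = {y. k # y \<in> U}" for k
  have "\<forall>k. \<exists>B. finite B \<and> B \<subseteq> S k \<and> S k = {b. \<exists>g\<in>B. pw_le g b}"
  proof
    fix k show "\<exists>B. finite B \<and> B \<subseteq> S k \<and> S k = {b. \<exists>g\<in>B. pw_le g b}"
      using based[of k] unfolding finitely_based_def S_def .
  qed
  then obtain GS where "\<forall>k. finite (GS k) \<and> GS k \<subseteq> S k \<and> S k = {b. \<exists>g\<in>GS k. pw_le g b}"
    by (rule choice[elim_format]) blast
  then have GS: "finite (GS k)" "GS k \<subseteq> S k" "S k = {b. \<exists>g\<in>GS k. pw_le g b}" for k
    by blast+
  define G where "G = (\<Union>k\<le>K. (Cons k) ` GS k)"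
  have "finite G" unfolding G_def using GS(1) by (intro finite_UN_I finite_imageI) auto
  moreover have "G \<subseteq> U"
  proof
    fix b assume "b \<in> G"
    then obtain k g where "b = k # g" "g \<in> GS k" unfolding G_def by blast
    then show "b \<in> U" using GS(2)[of k] unfolding S_def by blast
  qed
  moreover have "U \<subseteq> {b. \<exists>g\<in>G. pw_le g b}"
  proof
    fix b assume b: "b \<in> U"
    have "length b = Suc n" using subsetD[OF U(1) b] by simp
    then obtain x y where xy: "b = x # y" by (cases b) auto
    define k where "k = min x K"
    have "S x = S k"
    proof (cases "x \<le> K")
      case False
      then show ?thesis using K[rule_format, of x] by (simp add: k_def S_def)
    qed (simp add: k_def)
    moreover have "y \<in> S x" using b xy by (simp add: S_def)
    ultimately obtain g where g: "g \<in> GS k" "pw_le g y" using GS(3)[of k] by blast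
    have "k # g \<in> G" unfolding G_def using g(1) by (auto simp: k_def)
    moreover have "pw_le (k # g) b" using g(2) xy by (simp add: k_def)
    ultimately show "b \<in> {b. \<exists>g\<in>G. pw_le g b}" by blast
  qed
  moreover have "{b. \<exists>g\<in>G. pw_le g b} \<subseteq> U"
  proof
    fix b assume "b \<in> {b. \<exists>g\<in>G. pw_le g b}"
    then obtain g where "g \<in> U" "pw_le g b" using \<open>G \<subseteq> U\<close> by blast
    then show "b \<in> U" using U(2) unfolding upset_def by blast
  qed
  ultimately show ?thesis unfolding finitely_based_def by (intro exI[of _ G]) blast
qed

text \<open>Induction step of Dickson's lemma: the slices of an up-set of \<open>\<nat>^(n+1)\<close> form an
  ascending chain of up-sets of \<open>\<nat>^n\<close>, which stabilises since its union is finitely based.\<close>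
lemma finitely_based_Cons:
  assumes IH: "\<And>V. V \<subseteq> {a. length a = n} \<Longrightarrow> upset V \<Longrightarrow> finitely_based V"
    and U: "U \<subseteq> {a. length a = Suc n}" "upset U"
  shows "finitely_based U"
proof -
  define S where "S k = {y. k # y \<in> U}" for k
  have S_len: "S k \<subseteq> {a. length a = n}" for k using U(1) by (auto simp: S_def)
  have S_up: "upset (S k)" for k using U(2) unfolding upset_def S_def by simp
  have S_incr: "S k \<subseteq> S (Suc k)" for k
  proof
    fix y assume "y \<in> S k"
    then have "k # y \<in> U" "pw_le (k # y) (Suc k # y)" by (simp_all add: S_def)
    then show "y \<in> S (Suc k)" using U(2) unfolding upset_def S_def by blast
  qed
  have "(\<Union>k. S k) \<subseteq> {a. length a = n}" using S_len by blast
  moreover have "upset (\<Union>k. S k)" using S_up unfolding upset_def by blast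
  ultimately have "finitely_based (\<Union>k. S k)" by (rule IH)
  then obtain K where K: "\<forall>k\<ge>K. S k = S K"
    using upset_chain_stabilises_if_based[of S, OF S_up S_incr] by blast
  show ?thesis
    by (rule finitely_based_of_slices[OF U IH[OF S_len S_up, unfolded S_def] K[unfolded S_def]])
qed

lemma dickson:
  "U \<subseteq> {a. length a = n} \<Longrightarrow> upset U \<Longrightarrow> finitely_based U"
proof (induction n arbitrary: U)
  case 0
  then have "U \<subseteq> {[]}" by auto
  then show ?case unfolding finitely_based_def
    by (intro exI[of _ U]) (auto intro: finite_subset[of _ "{[]}"])
next
  case (Suc n)
  then show ?case using finitely_based_Cons by blast
qed

lemma upset_chain_stabilises:
  assumes "\<And>k. U k \<subseteq> {a. length a = n}" "\<And>k. upset (U k)" "\<And>k. U k \<subseteq> U (Suc k)"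
  shows "\<exists>K. \<forall>k\<ge>K. U k = U K"
proof (rule upset_chain_stabilises_if_based[of U, OF assms(2,3)])
  show "finitely_based (\<Union>k. U k)"
  proof (rule dickson[of _ n])
    show "(\<Union>k. U k) \<subseteq> {a. length a = n}" using assms(1) by blast
    show "upset (\<Union>k. U k)" using assms(2) unfolding upset_def by blast
  qed
qed

text \<open>The cone \<open>c + \<nat>^B\<close>: coordinates in \<open>B\<close> range freely above those of \<open>c\<close>, the others
  are equal to those of \<open>c\<close> (coordinates are numbered from \<open>0\<close>).\<close>
fun in_cone :: "nat list \<Rightarrow> nat set \<Rightarrow> nat list \<Rightarrow> bool" where
  "in_cone [] B [] = True"
| "in_cone (c#cs) B (x#xs) = ((if 0 \<in> B then c \<le> x else x = c) \<and> in_cone cs {k. Suc k \<in> B} xs)"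
| "in_cone _ _ _ = False"

lemma in_cone_length: "in_cone c B a \<Longrightarrow> length a = length c"
  by (induction c B a rule: in_cone.induct) auto

lemma in_cone_sum_le: "in_cone c B a \<Longrightarrow> sum_list c \<le> sum_list a"
  by (induction c B a rule: in_cone.induct) (auto split: if_splits)

definition cone_mult :: "(nat list \<times> nat set) list \<Rightarrow> nat list \<Rightarrow> nat" where
  "cone_mult C a = length (filter (\<lambda>cb. in_cone (fst cb) (snd cb) a) C)"

definition stanley_decomp :: "nat \<Rightarrow> (nat list \<times> nat set) list \<Rightarrow> nat list set \<Rightarrow> bool" where
  "stanley_decomp n C D \<longleftrightarrow> (\<forall>cb\<in>set C. length (fst cb) = n \<and> snd cb \<subseteq> {..<n}) \<and>
     (\<forall>a. length a = n \<longrightarrow> cone_mult C a = (if a \<in> D then 1 else 0))"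

definition cone_fix :: "nat \<Rightarrow> nat list \<times> nat set \<Rightarrow> nat list \<times> nat set" where
  "cone_fix k cb = (k # fst cb, Suc ` snd cb)"

definition cone_from :: "nat \<Rightarrow> nat list \<times> nat set \<Rightarrow> nat list \<times> nat set" where
  "cone_from k cb = (k # fst cb, insert 0 (Suc ` snd cb))"

lemma cone_mult_fix: "cone_mult (map (cone_fix k) C) (x # y) = (if x = k then cone_mult C y else 0)"
proof -
  have "{j. Suc j \<in> Suc ` B} = B" for B by auto
  then show ?thesis by (auto simp: cone_mult_def cone_fix_def o_def image_iff)
qed

lemma cone_mult_from: "cone_mult (map (cone_from k) C) (x # y) = (if k \<le> x then cone_mult C y else 0)"
proof -
  have "{j. Suc j \<in> insert 0 (Suc ` B)} = B" for B by auto
  then show ?thesis by (auto simp: cone_mult_def cone_from_def o_def)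
qed

lemma cone_mult_append: "cone_mult (C @ C') a = cone_mult C a + cone_mult C' a"
  by (simp add: cone_mult_def)

lemma cone_mult_concat: "cone_mult (concat Cs) a = (\<Sum>C\<leftarrow>Cs. cone_mult C a)"
  by (induction Cs) (auto simp: cone_mult_def)

text \<open>The slices form a descending chain of down-sets, constant from some \<open>K\<close> on (Dickson);
  slices \<open>0, \<dots>, K-1\<close> give cones with fixed first coordinate, slice \<open>K\<close> a free one.\<close>
lemma stanley_decomp_Cons:
  assumes IH: "\<And>D'. D' \<subseteq> {a. length a = n} \<Longrightarrow> downset D' \<Longrightarrow> \<exists>C. stanley_decomp n C D'"
    and D: "D \<subseteq> {a. length a = Suc n}" "downset D"
  shows "\<exists>C. stanley_decomp (Suc n) C D"
proof -
  define S where "S k = {y. k # y \<in> D}" for k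
  have S_len: "S k \<subseteq> {a. length a = n}" for k using D(1) by (auto simp: S_def)
  have S_down: "downset (S k)" for k using D(2) unfolding downset_def S_def by simp
  define U where "U k = {a. length a = n} - S k" for k
  have "U k \<subseteq> U (Suc k)" for k
  proof
    fix y assume y: "y \<in> U k"
    have "Suc k # y \<notin> D"
    proof
      assume "Suc k # y \<in> D"
      moreover have "pw_le (k # y) (Suc k # y)" by simp
      ultimately have "k # y \<in> D" using D(2) unfolding downset_def by blast
      then show False using y by (simp add: U_def S_def)
    qed
    then show "y \<in> U (Suc k)" using y by (simp add: U_def S_def)
  qed
  moreover have "upset (U k)" for k
    using S_down[of k] pw_le_length unfolding U_def upset_def downset_def by fastforce
  ultimately obtain K where K: "\<forall>k\<ge>K. U k = U K"
    using upset_chain_stabilises[of U n] unfolding U_def by blast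
  have S_const: "k \<ge> K \<Longrightarrow> S k = S K" for k using K S_len[of k] S_len[of K] unfolding U_def by blast
  obtain CS where CS: "stanley_decomp n (CS k) (S k)" for k using IH[OF S_len S_down] by metis
  define C where "C = concat (map (\<lambda>k. map (cone_fix k) (CS k)) [0..<K]) @ map (cone_from K) (CS K)"
  have "stanley_decomp (Suc n) C D" unfolding stanley_decomp_def
  proof (intro conjI allI impI)
    show "\<forall>cb\<in>set C. length (fst cb) = Suc n \<and> snd cb \<subseteq> {..<Suc n}"
      using CS unfolding stanley_decomp_def C_def cone_fix_def cone_from_def by fastforce
  next
    fix a :: "nat list" assume "length a = Suc n"
    then obtain x y where a: "a = x # y" "length y = n" by (cases a) auto
    have "cone_mult C a = (\<Sum>k\<leftarrow>[0..<K]. if x = k then cone_mult (CS k) y else 0)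
        + (if K \<le> x then cone_mult (CS K) y else 0)"
      unfolding C_def a cone_mult_append cone_mult_concat cone_mult_from
      by (simp add: o_def cone_mult_fix)
    also have "\<dots> = (if x < K then cone_mult (CS x) y else 0) + (if K \<le> x then cone_mult (CS K) y else 0)"
      by (simp add: sum_list_distinct_conv_sum_set sum.delta' atLeast0LessThan)
    also have "\<dots> = (if y \<in> S x then 1 else 0)"
      using CS a S_const[of x] unfolding stanley_decomp_def by auto
    finally show "cone_mult C a = (if a \<in> D then 1 else 0)" by (simp add: S_def a)
  qed
  then show ?thesis by blast
qed

lemma stanley_decomposition:
  "D \<subseteq> {a. length a = n} \<Longrightarrow> downset D \<Longrightarrow> \<exists>C. stanley_decomp n C D"
proof (induction n arbitrary: D)
  case 0
  then have D: "D \<subseteq> {[]}" by auto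
  show ?case
  proof (cases "[] \<in> D")
    case True
    then show ?thesis
      by (intro exI[of _ "[([], {})]"]) (use D in \<open>auto simp: stanley_decomp_def cone_mult_def\<close>)
  next
    case False
    then show ?thesis
      by (intro exI[of _ "[]"]) (use D in \<open>auto simp: stanley_decomp_def cone_mult_def\<close>)
  qed
next
  case (Suc n)
  then show ?case using stanley_decomp_Cons by blast
qed

section \<open>Generating series of cones\<close>

text \<open>The weighted degree \<open>\<Sum>i. a!i * f (s + i)\<close>: the \<open>Y\<close>-degree of the monomial with
  exponent vector \<open>a\<close> in the variables \<open>T_s, T_(s+1), \<dots>\<close>.\<close>
fun weighted_deg :: "(nat \<Rightarrow> nat) \<Rightarrow> nat \<Rightarrow> nat list \<Rightarrow> nat" where
  "weighted_deg f s [] = 0"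
| "weighted_deg f s (k#ks) = k * f s + weighted_deg f (Suc s) ks"

lemma weighted_deg_incr:
  "k < length xs \<Longrightarrow> weighted_deg f s (xs[k := xs ! k + 1]) = weighted_deg f s xs + f (s + k)"
  by (induction xs arbitrary: k s) (auto split: nat.splits simp: algebra_simps)

lemma geom_prod_empty: "geom_prod f {} = ls_one"
  by (simp add: geom_prod_def)

lemma geom_prod_insert_min:
  assumes "finite A" "\<forall>a\<in>A. s < a"
  shows "geom_prod f (insert s A) = ls_mult (geom (f s)) (geom_prod f A)"
proof -
  have "Min (insert s A) = s" using assms by (auto intro!: Min_eqI)
  moreover have "insert s A - {s} = A" using assms by auto
  ultimately have "sorted_list_of_set (insert s A) = s # sorted_list_of_set A"
    using sorted_list_of_set_nonempty[of "insert s A"] assms(1) by simp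
  then show ?thesis by (simp add: geom_prod_def)
qed

lemma ls_mult_neg:
  assumes "\<And>p. f p \<noteq> 0 \<Longrightarrow> fst p \<ge> 0" "\<And>n' d'. n' < 0 \<Longrightarrow> g (n', d') = 0" "n < 0"
  shows "ls_mult f g (n, d) = 0"
proof -
  have empty: "{p. f p \<noteq> 0 \<and> g (n - fst p, d - snd p) \<noteq> 0} = {}"
    using assms by fastforce
  have "ls_mult f g (n, d) = (\<Sum>p\<in>{p. f p \<noteq> 0 \<and> g (n - fst p, d - snd p) \<noteq> 0}. f p * g (n - fst p, d - snd p))"
    unfolding ls_mult_def by simp
  then show ?thesis unfolding empty by simp
qed

lemma geom_prod_neg: "n < 0 \<Longrightarrow> geom_prod f A (n, d) = 0"
proof -
  have "\<forall>n d. n < 0 \<longrightarrow> foldr ls_mult (map (\<lambda>i. geom (f i)) xs) ls_one (n, d) = 0" for xs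
  proof (induction xs)
    case Nil
    then show ?case by (simp add: ls_one_def)
  next
    case (Cons x xs)
    have "\<And>p. geom (f x) p \<noteq> 0 \<Longrightarrow> fst p \<ge> 0" by (auto simp: geom_def split: if_splits)
    then show ?case using Cons.IH by (auto intro: ls_mult_neg)
  qed
  moreover assume "n < 0"
  ultimately show ?thesis unfolding geom_prod_def by blast
qed

lemma ls_mult_geom:
  assumes g0: "\<And>a b. a < 0 \<Longrightarrow> g (a, b) = 0"
  shows "ls_mult (geom e) g (n, d) = (\<Sum>k\<in>{0..nat n}. g (n - int k, d - int k * int e))"
proof -
  define h where "h = (\<lambda>k::nat. (int k, int k * int e))"
  define K0 where "K0 = {k\<in>{0..nat n}. g (n - int k, d - int k * int e) \<noteq> 0}"
  have P: "{p. geom e p \<noteq> 0 \<and> g (n - fst p, d - snd p) \<noteq> 0} = h ` K0"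
  proof (intro equalityI subsetI)
    fix p assume "p \<in> {p. geom e p \<noteq> 0 \<and> g (n - fst p, d - snd p) \<noteq> 0}"
    then have p: "fst p \<ge> 0" "snd p = fst p * int e" "g (n - fst p, d - snd p) \<noteq> 0"
      by (auto simp: geom_def split: prod.splits if_splits)
    then have "n - fst p \<ge> 0" using g0 by force
    then have "nat (fst p) \<in> K0" using p by (auto simp: K0_def)
    moreover have "p = h (nat (fst p))" using p by (auto simp: h_def prod_eq_iff)
    ultimately show "p \<in> h ` K0" by blast
  next
    fix p assume "p \<in> h ` K0"
    then show "p \<in> {p. geom e p \<noteq> 0 \<and> g (n - fst p, d - snd p) \<noteq> 0}"
      by (auto simp: h_def K0_def geom_def)
  qed
  have "ls_mult (geom e) g (n, d) = (\<Sum>p\<in>h ` K0. geom e p * g (n - fst p, d - snd p))"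
    unfolding ls_mult_def by (simp add: P)
  also have "\<dots> = (\<Sum>k\<in>K0. g (n - int k, d - int k * int e))"
    by (subst sum.reindex) (auto simp: inj_on_def h_def geom_def)
  also have "\<dots> = (\<Sum>k\<in>{0..nat n}. g (n - int k, d - int k * int e))"
    by (rule sum.mono_neutral_left) (auto simp: K0_def)
  finally show ?thesis .
qed

lemma finite_cone_points: "finite {a. in_cone c B a \<and> int (sum_list a) = n \<and> P a}"
proof (rule finite_subset)
  show "{a. in_cone c B a \<and> int (sum_list a) = n \<and> P a} \<subseteq> {a. set a \<subseteq> {..nat n} \<and> length a = length c}"
    using in_cone_length by (auto simp: member_le_sum_list)
  show "finite {a. set a \<subseteq> {..nat n} \<and> length a = length c}"
    by (rule finite_lists_length_eq) simp
qed

lemma cone_points_Cons: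
  "{a. in_cone (c0 # cs) B a \<and> P a} =
     (\<Union>x\<in>{x. if 0 \<in> B then c0 \<le> x else x = c0}. Cons x ` {as. in_cone cs {k. Suc k \<in> B} as \<and> P (x # as)})"
  by (auto elim!: in_cone.elims[of "c0#cs"])

lemma card_Cons_slices:
  fixes slice :: "nat \<Rightarrow> nat list set" and N c0 :: nat
  assumes fin: "\<And>x. finite (slice x)" and empty: "\<And>k. k > N \<Longrightarrow> slice (c0 + k) = {}"
  shows "card (\<Union>x\<in>{x. c0 \<le> x}. Cons x ` slice x) = (\<Sum>k\<in>{0..N}. card (slice (c0 + k)))"
proof -
  have "(\<Union>x\<in>{x. c0 \<le> x}. Cons x ` slice x) = (\<Union>k\<in>{0..N}. Cons (c0 + k) ` slice (c0 + k))"
  proof (intro equalityI subsetI)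
    fix a assume "a \<in> (\<Union>x\<in>{x. c0 \<le> x}. Cons x ` slice x)"
    then obtain x as where x: "c0 \<le> x" "as \<in> slice x" "a = x # as" by blast
    then have "x - c0 \<in> {0..N}" using empty[of "x - c0"] by (cases "x - c0 > N") auto
    then show "a \<in> (\<Union>k\<in>{0..N}. Cons (c0 + k) ` slice (c0 + k))" using x by force
  next
    fix a assume "a \<in> (\<Union>k\<in>{0..N}. Cons (c0 + k) ` slice (c0 + k))"
    then obtain k as where "as \<in> slice (c0 + k)" "a = (c0 + k) # as" by blast
    then show "a \<in> (\<Union>x\<in>{x. c0 \<le> x}. Cons x ` slice x)" by (intro UN_I[of "c0 + k"]) auto
  qed
  moreover have "card (\<Union>k\<in>{0..N}. Cons (c0 + k) ` slice (c0 + k))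
      = (\<Sum>k\<in>{0..N}. card (Cons (c0 + k) ` slice (c0 + k)))"
    by (rule card_UN_disjoint) (auto intro!: finite_imageI fin)
  ultimately show ?thesis by (simp add: card_image)
qed

lemma cone_series:
  "B \<subseteq> {..<length c} \<Longrightarrow>
   int (card {a. in_cone c B a \<and> int (sum_list a) = n \<and> int (weighted_deg f s a) = d}) =
   geom_prod f ((+) s ` B) (n - int (sum_list c), d - int (weighted_deg f s c))"
proof (induction c arbitrary: B s n d)
  case Nil
  then have "B = {}" by auto
  moreover have "{a. in_cone [] {} a \<and> int (sum_list a) = n \<and> int (weighted_deg f s a) = d}
      = (if n = 0 \<and> d = 0 then {[]} else {})"
    by (auto elim: in_cone.elims)
  ultimately show ?case by (simp add: geom_prod_empty ls_one_def)
next
  case (Cons c0 cs)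
  define B' where "B' = {k. Suc k \<in> B}"
  define A where "A = (+) (Suc s) ` B'"
  define g where "g = geom_prod f A"
  define slice where "slice x = {as. in_cone cs B' as \<and> int (sum_list as) = n - int x
      \<and> int (weighted_deg f (Suc s) as) = d - int x * int (f s)}" for x
  define N where "N = n - int c0 - int (sum_list cs)"
  define D where "D = d - int c0 * int (f s) - int (weighted_deg f (Suc s) cs)"
  have B'_bound: "B' \<subseteq> {..<length cs}" using Cons.prems by (auto simp: B'_def)
  then have finite_A: "finite A" unfolding A_def using finite_subset by blast
  have slice: "int (card (slice x)) =
      g (n - int x - int (sum_list cs), d - int x * int (f s) - int (weighted_deg f (Suc s) cs))" for x
    using Cons.IH[OF B'_bound] unfolding slice_def g_def A_def by simp
  have points: "{a. in_cone (c0 # cs) B a \<and> int (sum_list a) = n \<and> int (weighted_deg f s a) = d}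
      = (\<Union>x\<in>{x. if 0 \<in> B then c0 \<le> x else x = c0}. Cons x ` slice x)"
    unfolding cone_points_Cons slice_def B'_def by (simp add: algebra_simps)
  have shift_B: "(+) s ` B = (if 0 \<in> B then insert s A else A)"
    unfolding A_def B'_def by (auto simp: image_iff) (metis not0_implies_Suc)+
  show ?case
  proof (cases "0 \<in> B")
    case False
    then show ?thesis unfolding points shift_B using slice[of c0]
      by (simp add: card_image g_def N_def D_def algebra_simps)
  next
    case True
    have slice_empty: "slice (c0 + k) = {}" if "k > nat N" for k
      using in_cone_sum_le[of cs B'] that unfolding slice_def N_def by fastforce
    have "finite (slice x)" for x unfolding slice_def by (rule finite_cone_points)
    then have "int (card (\<Union>x\<in>{x. c0 \<le> x}. Cons x ` slice x)) = (\<Sum>k\<in>{0..nat N}. int (card (slice (c0 + k))))"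
      using card_Cons_slices[of slice "nat N" c0] slice_empty by simp
    also have "\<dots> = (\<Sum>k\<in>{0..nat N}. g (N - int k, D - int k * int (f s)))"
      unfolding slice N_def D_def by (simp add: algebra_simps)
    also have "\<dots> = ls_mult (geom (f s)) g (N, D)"
      using ls_mult_geom[of g] geom_prod_neg unfolding g_def by simp
    also have "\<dots> = geom_prod f (insert s A) (N, D)"
      by (subst geom_prod_insert_min) (use finite_A in \<open>auto simp: A_def g_def\<close>)
    finally show ?thesis unfolding points shift_B using True by (simp add: N_def D_def algebra_simps)
  qed
qed

section \<open>Bigraded modules over \<open>A[T_1, \<dots>, T_m]\<close>\<close>

fun mono_act :: "(nat \<Rightarrow> 'b \<Rightarrow> 'b) \<Rightarrow> nat \<Rightarrow> nat list \<Rightarrow> 'b \<Rightarrow> 'b" where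
  "mono_act T s [] x = x"
| "mono_act T s (k#ks) x = (T s ^^ k) (mono_act T (Suc s) ks x)"

lemma mono_act_zeros: "mono_act T s (replicate n 0) x = x"
  by (induction n arbitrary: s) auto

lemma gen_submod_sum:
  "finite A \<Longrightarrow> (\<forall>a\<in>A. f a \<in> gen_submod smul m T S) \<Longrightarrow> sum f A \<in> gen_submod smul m T S"
  by (induction A rule: finite_induct) (auto intro: gen_submod.intros)

lemma gen_submod_mono:
  assumes "S \<subseteq> gen_submod smul m T S'"
  shows "gen_submod smul m T S \<subseteq> gen_submod smul m T S'"
proof
  fix x assume "x \<in> gen_submod smul m T S"
  then show "x \<in> gen_submod smul m T S'"
    by induction (use assms in \<open>auto intro: gen_submod.intros\<close>)
qed

locale bigraded_module =
  fixes smul :: "'a::comm_ring_1 \<Rightarrow> 'b::ab_group_add \<Rightarrow> 'b"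
    and m :: nat
    and T :: "nat \<Rightarrow> 'b \<Rightarrow> 'b"
    and f2 :: "nat \<Rightarrow> nat"
    and G :: "int \<times> int \<Rightarrow> 'b set"
  assumes poly_mod: "poly_module smul m T"
    and bigrad: "bigraded smul m T f2 G"
begin

sublocale module smul
  using poly_mod unfolding poly_module_def by blast

lemma T_add: "i \<in> {1..m} \<Longrightarrow> T i (x + y) = T i x + T i y"
  using poly_mod unfolding poly_module_def by blast

lemma T_smul: "i \<in> {1..m} \<Longrightarrow> T i (smul c x) = smul c (T i x)"
  using poly_mod unfolding poly_module_def by blast

lemma T_comm: "i \<in> {1..m} \<Longrightarrow> j \<in> {1..m} \<Longrightarrow> T i (T j x) = T j (T i x)"
  using poly_mod unfolding poly_module_def by blast

lemma G_subspace: "subspace (G p)"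
  using bigrad unfolding bigraded_def by (elim conjE) (erule allE)

lemma G_decomp: "\<exists>!c :: int \<times> int \<Rightarrow> 'b. finite {p. c p \<noteq> 0} \<and> (\<forall>p. c p \<in> G p) \<and>
    x = (\<Sum>p\<in>{p. c p \<noteq> 0}. c p)"
  using bigrad unfolding bigraded_def by (elim conjE) (erule allE)

lemma G_T: "i \<in> {1..m} \<Longrightarrow> x \<in> G (n, d) \<Longrightarrow> T i x \<in> G (n + 1, d + int (f2 i))"
  using bigrad unfolding bigraded_def by simp

lemma G_component_unique:
  assumes "x \<in> G p" "finite Qs" "\<forall>q\<in>Qs. y q \<in> G q" "x = (\<Sum>q\<in>Qs. y q)"
  shows "x = (if p \<in> Qs then y p else 0)"
proof -
  define c1 where "c1 = (\<lambda>q. if q = p then x else 0)"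
  define c2 where "c2 = (\<lambda>q. if q \<in> Qs then y q else 0)"
  have P1: "finite {q. c1 q \<noteq> 0} \<and> (\<forall>q. c1 q \<in> G q) \<and> x = (\<Sum>q\<in>{q. c1 q \<noteq> 0}. c1 q)"
  proof (intro conjI allI)
    show "finite {q. c1 q \<noteq> 0}" by (rule finite_subset[of _ "{p}"]) (auto simp: c1_def)
    fix q show "c1 q \<in> G q" using assms(1) subspace_0[OF G_subspace] by (auto simp: c1_def)
  next
    show "x = (\<Sum>q\<in>{q. c1 q \<noteq> 0}. c1 q)"
      by (cases "x = 0") (auto simp: c1_def)
  qed
  have P2: "finite {q. c2 q \<noteq> 0} \<and> (\<forall>q. c2 q \<in> G q) \<and> x = (\<Sum>q\<in>{q. c2 q \<noteq> 0}. c2 q)"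
  proof (intro conjI allI)
    show "finite {q. c2 q \<noteq> 0}" by (rule finite_subset[OF _ assms(2)]) (auto simp: c2_def)
    fix q show "c2 q \<in> G q" using assms(3) subspace_0[OF G_subspace] by (auto simp: c2_def)
  next
    have "(\<Sum>q\<in>{q. c2 q \<noteq> 0}. c2 q) = (\<Sum>q\<in>Qs. c2 q)"
      by (rule sum.mono_neutral_left) (auto simp: c2_def assms(2))
    also have "\<dots> = (\<Sum>q\<in>Qs. y q)" by (rule sum.cong) (auto simp: c2_def)
    finally show "x = (\<Sum>q\<in>{q. c2 q \<noteq> 0}. c2 q)" using assms(4) by simp
  qed
  have "c1 = c2" using G_decomp[of x] P1 P2 by blast
  then have "c1 p = c2 p" by simp
  then show ?thesis by (simp add: c1_def c2_def)
qed

lemma nonzero_component: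
  fixes x :: 'b
  assumes "x \<noteq> 0"
  shows "\<exists>p. G p \<noteq> {0}"
proof -
  obtain c :: "int \<times> int \<Rightarrow> 'b" where c: "\<forall>p. c p \<in> G p" "x = (\<Sum>p\<in>{p. c p \<noteq> 0}. c p)"
    using G_decomp[of x] by blast
  have "{p. c p \<noteq> 0} \<noteq> {}"
  proof
    assume "{p. c p \<noteq> 0} = {}"
    then have "x = 0" using c(2) by (simp only: sum.empty)
    then show False using assms by simp
  qed
  then obtain p where "c p \<noteq> 0" by blast
  then show ?thesis using c(1) by blast
qed

lemma homogeneous_generators:
  assumes "finitely_generated smul m T"
  shows "\<exists>hs. (\<forall>hq\<in>set hs. fst hq \<in> G (snd hq)) \<and> gen_submod smul m T (fst ` set hs) = UNIV"
proof -
  obtain S where S: "finite S" "gen_submod smul m T S = UNIV"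
    using assms unfolding finitely_generated_def by blast
  have "\<forall>x. \<exists>c. finite {p. c p \<noteq> 0} \<and> (\<forall>p. c p \<in> G p) \<and> x = (\<Sum>p\<in>{p. c p \<noteq> 0}. c p)"
    using G_decomp by blast
  then obtain cs where cs: "\<forall>x. finite {p. cs x p \<noteq> 0} \<and> (\<forall>p. cs x p \<in> G p) \<and>
      x = (\<Sum>p\<in>{p. cs x p \<noteq> 0}. cs x p)"
    by (rule choice[elim_format]) blast
  define H where "H = (\<Union>s\<in>S. (\<lambda>p. (cs s p, p)) ` {p. cs s p \<noteq> 0})"
  have "finite H" unfolding H_def using S(1) cs by (intro finite_UN_I finite_imageI) auto
  then obtain hs where hs: "set hs = H" using finite_list by blast
  have "S \<subseteq> gen_submod smul m T (fst ` H)"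
  proof
    fix s assume s: "s \<in> S"
    have "s = (\<Sum>p\<in>{p. cs s p \<noteq> 0}. cs s p)" using cs by blast
    also have "\<dots> \<in> gen_submod smul m T (fst ` H)"
    proof (rule gen_submod_sum)
      show "finite {p. cs s p \<noteq> 0}" using cs by blast
      show "\<forall>p\<in>{p. cs s p \<noteq> 0}. cs s p \<in> gen_submod smul m T (fst ` H)"
      proof
        fix p assume "p \<in> {p. cs s p \<noteq> 0}"
        then have "(cs s p, p) \<in> H" using s unfolding H_def by blast
        then have "cs s p \<in> fst ` H" by (metis fst_conv image_eqI)
        then show "cs s p \<in> gen_submod smul m T (fst ` H)" by (rule gen_base)
      qed
    qed
    finally show "s \<in> gen_submod smul m T (fst ` H)" .
  qed
  then have "gen_submod smul m T (fst ` H) = UNIV" using gen_submod_mono S(2) by blast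
  moreover have "\<forall>hq\<in>set hs. fst hq \<in> G (snd hq)" unfolding hs H_def using cs by force
  ultimately show ?thesis using hs by blast
qed

lemma funpow_T_comm: "i \<in> {1..m} \<Longrightarrow> j \<in> {1..m} \<Longrightarrow> T i ((T j ^^ k) x) = (T j ^^ k) (T i x)"
proof (induction k)
  case (Suc k)
  have "T i ((T j ^^ Suc k) x) = T j (T i ((T j ^^ k) x))"
    using T_comm[OF Suc.prems] by simp
  then show ?case using Suc by simp
qed simp

lemma funpow_T_G: "i \<in> {1..m} \<Longrightarrow> x \<in> G (n, d) \<Longrightarrow>
    (T i ^^ k) x \<in> G (n + int k, d + int k * int (f2 i))"
proof (induction k)
  case (Suc k)
  then show ?case using G_T[OF Suc.prems(1) Suc.IH[OF Suc.prems]] by (simp add: algebra_simps)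
qed simp

definition exps_in_range :: "nat \<Rightarrow> nat list \<Rightarrow> bool" where
  "exps_in_range s a \<longleftrightarrow> 1 \<le> s \<and> s + length a \<le> m + 1"

lemma mono_act_G: "exps_in_range s a \<Longrightarrow> x \<in> G (n, d) \<Longrightarrow>
    mono_act T s a x \<in> G (n + int (sum_list a), d + int (weighted_deg f2 s a))"
proof (induction a arbitrary: s n d)
  case (Cons k ks)
  have "exps_in_range (Suc s) ks" "s \<in> {1..m}" using Cons.prems by (auto simp: exps_in_range_def)
  from funpow_T_G[OF this(2) Cons.IH[OF this(1) Cons.prems(2)], of k] show ?case
    by (simp add: algebra_simps)
qed simp

lemma mono_act_T:
  "exps_in_range s a \<Longrightarrow> s \<le> i \<Longrightarrow> i < s + length a \<Longrightarrow>
    T i (mono_act T s a x) = mono_act T s (a[i - s := a ! (i - s) + 1]) x"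
proof (induction a arbitrary: s)
  case Nil then show ?case by simp
next
  case (Cons k ks)
  have i: "i \<in> {1..m}" "s \<in> {1..m}" using Cons.prems by (auto simp: exps_in_range_def)
  show ?case
  proof (cases "i = s")
    case True
    then show ?thesis by (simp add: funpow_swap1[of "T s" k, symmetric])
  next
    case False
    then have "Suc s \<le> i" "i - s = Suc (i - Suc s)" using Cons.prems by auto
    moreover have "exps_in_range (Suc s) ks" using Cons.prems by (auto simp: exps_in_range_def)
    ultimately show ?thesis using Cons.prems Cons.IH[of "Suc s"]
      by (simp add: funpow_T_comm[OF i])
  qed
qed

lemma T_span:
  assumes "i \<in> {1..m}" "\<And>y. y \<in> A \<Longrightarrow> T i y \<in> span B" "x \<in> span A"
  shows "T i x \<in> span B"
proof -
  have "span A \<subseteq> {y. T i y \<in> span B}"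
  proof (rule span_minimal)
    show "A \<subseteq> {y. T i y \<in> span B}" using assms(2) by blast
    have "T i 0 = 0" using T_add[OF assms(1), of 0 0] by simp
    then show "subspace {y. T i y \<in> span B}" unfolding subspace_def
      using T_add[OF assms(1)] T_smul[OF assms(1)]
      by (auto intro: span_zero span_add span_scale)
  qed
  then show ?thesis using assms(3) by blast
qed

end

section \<open>The filtration of a component by labelled monomials\<close>

fun lex_lt :: "nat list \<Rightarrow> nat list \<Rightarrow> bool" where
  "lex_lt (x#xs) (y#ys) = (x < y \<or> (x = y \<and> lex_lt xs ys))"
| "lex_lt _ _ = False"

lemma lex_lt_irrefl: "\<not> lex_lt a a"
  by (induction a) auto

lemma lex_lt_trans: "lex_lt a b \<Longrightarrow> lex_lt b c \<Longrightarrow> lex_lt a c"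
proof (induction a b arbitrary: c rule: lex_lt.induct)
  case (1 x xs y ys)
  then show ?case by (cases c) auto
qed auto

lemma lex_lt_total: "length a = length b \<Longrightarrow> a \<noteq> b \<Longrightarrow> lex_lt a b \<or> lex_lt b a"
proof (induction a arbitrary: b)
  case (Cons x xs)
  then show ?case by (cases b) auto
qed simp

lemma lex_lt_incr: "lex_lt a b \<Longrightarrow> lex_lt (a[k := a ! k + 1]) (b[k := b ! k + 1])"
proof (induction a b arbitrary: k rule: lex_lt.induct)
  case (1 x xs y ys)
  then show ?case by (cases k) auto
qed auto

text \<open>A label \<open>(j, a)\<close> stands for the monomial \<open>T^a\<close> applied to the \<open>j\<close>-th generator; labels
  are ordered first by generator, then lexicographically.\<close>
definition label_lt :: "nat \<times> nat list \<Rightarrow> nat \<times> nat list \<Rightarrow> bool" where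
  "label_lt q r \<longleftrightarrow> fst q < fst r \<or> (fst q = fst r \<and> lex_lt (snd q) (snd r))"

lemma label_lt_irrefl: "\<not> label_lt q q"
  by (simp add: label_lt_def lex_lt_irrefl)

lemma label_lt_trans: "label_lt q r \<Longrightarrow> label_lt r s \<Longrightarrow> label_lt q s"
  unfolding label_lt_def using lex_lt_trans by auto

lemma label_lt_total: "length (snd q) = length (snd r) \<Longrightarrow> q \<noteq> r \<Longrightarrow> label_lt q r \<or> label_lt r q"
  unfolding label_lt_def using lex_lt_total[of "snd q" "snd r"] by (auto simp: prod_eq_iff)

text \<open>Multiplying a label by the variable \<open>T_(k+1)\<close>.\<close>
definition label_incr :: "nat \<times> nat list \<Rightarrow> nat \<Rightarrow> nat \<times> nat list" where
  "label_incr q k = (fst q, (snd q)[k := snd q ! k + 1])"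

lemma label_lt_incr: "label_lt x q \<Longrightarrow> label_lt (label_incr x k) (label_incr q k)"
  unfolding label_lt_def label_incr_def using lex_lt_incr by auto

locale bigraded_module_gens = bigraded_module +
  fixes hs :: "('b \<times> (int \<times> int)) list"
  assumes hs_G: "\<forall>hq\<in>set hs. fst hq \<in> G (snd hq)"
    and hs_gen: "gen_submod smul m T (fst ` set hs) = UNIV"
begin

definition label_vec :: "nat \<times> nat list \<Rightarrow> 'b" where
  "label_vec q = mono_act T 1 (snd q) (fst (hs ! fst q))"

definition label_deg :: "nat \<times> nat list \<Rightarrow> int \<times> int" where
  "label_deg q = (fst (snd (hs ! fst q)) + int (sum_list (snd q)),
                  snd (snd (hs ! fst q)) + int (weighted_deg f2 1 (snd q)))"

definition labels :: "(nat \<times> nat list) set" where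
  "labels = {q. fst q < length hs \<and> length (snd q) = m}"

definition labels_of_deg :: "int \<times> int \<Rightarrow> (nat \<times> nat list) set" where
  "labels_of_deg p = {q \<in> labels. label_deg q = p}"

lemma label_vec_G: "q \<in> labels \<Longrightarrow> label_vec q \<in> G (label_deg q)"
proof -
  assume q: "q \<in> labels"
  then have "hs ! fst q \<in> set hs" by (simp add: labels_def)
  then have "fst (hs ! fst q) \<in> G (fst (snd (hs ! fst q)), snd (snd (hs ! fst q)))"
    using hs_G by simp
  then show ?thesis unfolding label_vec_def label_deg_def
    using q by (intro mono_act_G) (auto simp: exps_in_range_def labels_def)
qed

lemma label_vec_T:
  "q \<in> labels \<Longrightarrow> k < m \<Longrightarrow> T (Suc k) (label_vec q) = label_vec (label_incr q k)"
  unfolding label_vec_def labels_def label_incr_def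
  using mono_act_T[of 1 "snd q" "Suc k"] by (auto simp: exps_in_range_def)

lemma labels_incr: "q \<in> labels \<Longrightarrow> label_incr q k \<in> labels"
  unfolding labels_def label_incr_def by auto

lemma label_deg_incr: "q \<in> labels \<Longrightarrow> k < m \<Longrightarrow>
   label_deg (label_incr q k) = (fst (label_deg q) + 1, snd (label_deg q) + int (f2 (Suc k)))"
  unfolding label_deg_def labels_def label_incr_def
  using sum_list_incr[of k "snd q"] weighted_deg_incr[of k "snd q" f2 1] by auto

lemma span_labels: "span (label_vec ` labels) = UNIV"
proof -
  have "gen_submod smul m T (fst ` set hs) \<subseteq> span (label_vec ` labels)"
  proof
    fix x assume "x \<in> gen_submod smul m T (fst ` set hs)"
    then show "x \<in> span (label_vec ` labels)"
    proof induction
      case (gen_base x)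
      then obtain j where j: "j < length hs" "x = fst (hs ! j)"
        by (metis imageE in_set_conv_nth)
      then have "x = label_vec (j, replicate m 0)" by (simp add: label_vec_def mono_act_zeros)
      moreover have "(j, replicate m 0) \<in> labels" using j by (simp add: labels_def)
      ultimately show ?case by (intro span_base) blast
    next
      case (gen_T i x)
      then obtain k where k: "i = Suc k" "k < m" by (cases i) auto
      show ?case
      proof (rule T_span[OF gen_T(1) _ gen_T(3)])
        fix y assume "y \<in> label_vec ` labels"
        then obtain q where q: "q \<in> labels" "y = label_vec q" by blast
        then have "T i y = label_vec (label_incr q k)" using label_vec_T k by simp
        moreover have "label_incr q k \<in> labels" using labels_incr q(1) by blast
        ultimately show "T i y \<in> span (label_vec ` labels)" by (metis image_eqI span_base)
      qed
    qed (auto intro: span_zero span_add span_scale)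
  qed
  then show ?thesis using hs_gen by auto
qed

lemma component_span: "G p = span (label_vec ` labels_of_deg p)"
proof
  show "span (label_vec ` labels_of_deg p) \<subseteq> G p"
    by (rule span_minimal) (use label_vec_G G_subspace in \<open>auto simp: labels_of_deg_def\<close>)
  show "G p \<subseteq> span (label_vec ` labels_of_deg p)"
  proof
    fix x assume xG: "x \<in> G p"
    have "x \<in> span (label_vec ` labels)" using span_labels by simp
    then obtain t r where tr: "finite t" "t \<subseteq> label_vec ` labels" "x = (\<Sum>a\<in>t. smul (r a) a)"
      unfolding span_explicit by blast
    have "\<forall>v\<in>t. \<exists>q. q \<in> labels \<and> label_vec q = v" using tr(2) by blast
    then obtain lv where lv: "\<forall>v\<in>t. lv v \<in> labels \<and> label_vec (lv v) = v"
      by (rule bchoice[elim_format]) blast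
    define dg where "dg v = label_deg (lv v)" for v
    define y where "y q = (\<Sum>v\<in>{v\<in>t. dg v = q}. smul (r v) v)" for q
    have "x = (\<Sum>q\<in>dg ` t. y q)"
      unfolding tr(3) y_def by (rule sum.group[symmetric]) (use tr(1) in auto)
    moreover have "\<forall>q\<in>dg ` t. y q \<in> G q"
    proof
      fix q assume "q \<in> dg ` t"
      show "y q \<in> G q" unfolding y_def
      proof (rule subspace_sum[OF G_subspace])
        fix v assume "v \<in> {v\<in>t. dg v = q}"
        then have "v \<in> G q" using lv label_vec_G[of "lv v"] by (auto simp: dg_def)
        then show "smul (r v) v \<in> G q" by (rule subspace_scale[OF G_subspace])
      qed
    qed
    ultimately have "x = (if p \<in> dg ` t then y p else 0)"
      using G_component_unique[OF xG] tr(1) by blast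
    moreover have "y p \<in> span (label_vec ` labels_of_deg p)" unfolding y_def
    proof (rule span_sum)
      fix v assume v: "v \<in> {v\<in>t. dg v = p}"
      then have "lv v \<in> labels_of_deg p" using lv by (auto simp: labels_of_deg_def dg_def)
      then have "v \<in> label_vec ` labels_of_deg p" using lv v by (metis (mono_tags, lifting) image_eqI mem_Collect_eq)
      then show "smul (r v) v \<in> span (label_vec ` labels_of_deg p)" by (intro span_scale span_base)
    qed
    ultimately show "x \<in> span (label_vec ` labels_of_deg p)" using span_zero by auto
  qed
qed

lemma finite_labels_of_deg: "finite (labels_of_deg p)"
proof (rule finite_subset)
  define N where "N j = nat (fst p - fst (snd (hs ! j)))" for j
  show "labels_of_deg p \<subseteq> (\<Union>j<length hs. {j} \<times> {a. set a \<subseteq> {..N j} \<and> length a = m})"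
  proof
    fix q assume q: "q \<in> labels_of_deg p"
    then have "sum_list (snd q) = N (fst q)"
      unfolding N_def labels_of_deg_def label_deg_def by auto
    then have "set (snd q) \<subseteq> {..N (fst q)}" by (auto dest: member_le_sum_list)
    then show "q \<in> (\<Union>j<length hs. {j} \<times> {a. set a \<subseteq> {..N j} \<and> length a = m})"
      using q unfolding labels_of_deg_def labels_def by (cases q) auto
  qed
  show "finite (\<Union>j<length hs. {j} \<times> {a. set a \<subseteq> {..N j} \<and> length a = m})"
    by (intro finite_UN_I finite_cartesian_product finite_lists_length_eq) auto
qed

definition layer_below :: "nat \<times> nat list \<Rightarrow> 'b set" where
  "layer_below q = span (label_vec ` {x\<in>labels_of_deg (label_deg q). label_lt x q})"

definition layer_len :: "nat \<times> nat list \<Rightarrow> nat" where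
  "layer_len q = rel_len smul (layer_below q) (span (insert (label_vec q) (layer_below q)))"

lemma component_len_sum:
  assumes "rel_finite_len smul {0} (G p)"
  shows "rel_len smul {0} (G p) = (\<Sum>q\<in>labels_of_deg p. layer_len q)"
proof -
  have "rel_len smul {0} (span (label_vec ` labels_of_deg p)) =
    (\<Sum>q\<in>labels_of_deg p. rel_len smul (span (label_vec ` {x\<in>labels_of_deg p. label_lt x q}))
                                      (span (label_vec ` {x\<in>labels_of_deg p. label_lt x q \<or> x = q})))"
  proof (rule rel_len_filtration_sum)
    show "x \<in> labels_of_deg p \<Longrightarrow> y \<in> labels_of_deg p \<Longrightarrow> x \<noteq> y \<Longrightarrow> label_lt x y \<or> label_lt y x" for x y
      by (rule label_lt_total) (auto simp: labels_of_deg_def labels_def)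
  qed (use finite_labels_of_deg label_lt_irrefl label_lt_trans assms component_span in auto)
  also have "\<dots> = (\<Sum>q\<in>labels_of_deg p. layer_len q)"
  proof (rule sum.cong)
    fix q assume q: "q \<in> labels_of_deg p"
    then have "{x\<in>labels_of_deg p. label_lt x q \<or> x = q} = insert q {x\<in>labels_of_deg p. label_lt x q}"
      by auto
    then show "rel_len smul (span (label_vec ` {x\<in>labels_of_deg p. label_lt x q}))
        (span (label_vec ` {x\<in>labels_of_deg p. label_lt x q \<or> x = q})) = layer_len q"
      using q unfolding layer_len_def layer_below_def span_insert_span
      by (simp add: labels_of_deg_def)
  qed simp
  finally show ?thesis using component_span by simp
qed

end

section \<open>Layer lengths are antitone in the exponent vector\<close>

locale bigraded_module_fl = bigraded_module_gens +
  assumes fin_len: "\<forall>p. rel_finite_len smul {0} (G p)"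
begin

lemma layer_below_subspace: "subspace (layer_below q)"
  unfolding layer_below_def by simp

lemma layer_finite_len:
  assumes "q \<in> labels"
  shows "rel_finite_len smul (layer_below q) (span (insert (label_vec q) (layer_below q)))"
proof (rule rel_finite_len_mono[OF fin_len[rule_format, of "label_deg q"]])
  have "insert q {x\<in>labels_of_deg (label_deg q). label_lt x q} \<subseteq> labels_of_deg (label_deg q)"
    using assms by (auto simp: labels_of_deg_def)
  then have "span (label_vec ` insert q {x\<in>labels_of_deg (label_deg q). label_lt x q})
      \<subseteq> G (label_deg q)"
    unfolding component_span by (intro span_mono) blast
  then show "span (insert (label_vec q) (layer_below q)) \<subseteq> G (label_deg q)"
    unfolding layer_below_def span_insert_span by simp
  show "{0} \<subseteq> layer_below q" unfolding layer_below_def by (simp add: span_zero)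
qed (auto simp: G_subspace layer_below_subspace)

text \<open>Multiplication by \<open>T_(k+1)\<close> maps the layer of \<open>q\<close> onto a subquotient of the layer of
  \<open>label_incr q k\<close>, since the order on labels is a monomial order.\<close>
lemma layer_len_incr_le:
  assumes q: "q \<in> labels" and k: "k < m"
  shows "layer_len (label_incr q k) \<le> layer_len q"
proof -
  define q' where "q' = label_incr q k"
  have q': "q' \<in> labels" using labels_incr[OF q] by (simp add: q'_def)
  have ki: "Suc k \<in> {1..m}" using k by simp
  have below: "T (Suc k) x \<in> layer_below q'" if x: "x \<in> layer_below q" for x
    unfolding layer_below_def
  proof (rule T_span[OF ki _ x[unfolded layer_below_def]])
    fix y assume "y \<in> label_vec ` {x\<in>labels_of_deg (label_deg q). label_lt x q}"
    then obtain x0 where x0: "x0 \<in> labels" "label_deg x0 = label_deg q" "label_lt x0 q" "y = label_vec x0"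
      by (auto simp: labels_of_deg_def)
    have "label_incr x0 k \<in> {x\<in>labels_of_deg (label_deg q'). label_lt x q'}"
      using labels_incr[OF x0(1)] label_deg_incr[OF x0(1) k] label_deg_incr[OF q k]
        label_lt_incr[OF x0(3)] x0(2)
      unfolding labels_of_deg_def q'_def by simp
    moreover have "T (Suc k) y = label_vec (label_incr x0 k)" using label_vec_T[OF x0(1) k] x0(4) by simp
    ultimately show "T (Suc k) y \<in> span (label_vec ` {x\<in>labels_of_deg (label_deg q'). label_lt x q'})"
      by (auto intro: span_base)
  qed
  have "rel_chain smul (layer_below q') (span (insert (label_vec q') (layer_below q'))) (layer_len q')"
    unfolding layer_len_def
    by (rule rel_len_chain[OF layer_finite_len[OF q']])
      (auto simp: layer_below_subspace intro: span_superset[THEN subsetD])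
  then show ?thesis unfolding q'_def[symmetric]
    by (subst (2) layer_len_def, intro rel_len_shift[OF T_smul[OF ki] _ _ below])
      (auto simp: layer_below_subspace label_vec_T[OF q k] q'_def layer_finite_len[OF q])
qed

lemma layer_len_antitone:
  assumes "(j, a) \<in> labels" "pw_le a b"
  shows "layer_len (j, b) \<le> layer_len (j, a)"
  using assms(2)
proof (induction "sum_list b" arbitrary: b rule: less_induct)
  case less
  show ?case
  proof (cases "a = b")
    case False
    then obtain k b0 where b0: "k < length b0" "pw_le a b0" "b = b0[k := b0 ! k + 1]"
        "sum_list b0 < sum_list b"
      using pw_le_step_down[OF less.prems] by blast
    have "(j, b0) \<in> labels" "k < m"
      using assms(1) pw_le_length[OF b0(2)] b0(1) by (auto simp: labels_def)
    then have "layer_len (label_incr (j, b0) k) \<le> layer_len (j, b0)" by (rule layer_len_incr_le)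
    moreover have "label_incr (j, b0) k = (j, b)" using b0(3) by (simp add: label_incr_def)
    ultimately show ?thesis using less.hyps[OF b0(4) b0(2)] by simp
  qed simp
qed

definition level_set :: "nat \<Rightarrow> nat \<Rightarrow> nat list set" where
  "level_set j t = {a. length a = m \<and> t \<le> layer_len (j, a)}"

lemma level_set_downset: "j < length hs \<Longrightarrow> downset (level_set j t)"
  unfolding downset_def level_set_def
proof (intro allI impI)
  fix a b assume j: "j < length hs" and b: "b \<in> {a. length a = m \<and> t \<le> layer_len (j, a)}"
    and ab: "pw_le a b"
  have "length a = m" using pw_le_length[OF ab] b by simp
  moreover then have "layer_len (j, b) \<le> layer_len (j, a)"
    using j ab by (intro layer_len_antitone) (auto simp: labels_def)
  ultimately show "a \<in> {a. length a = m \<and> t \<le> layer_len (j, a)}" using b by simp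
qed

text \<open>All layers of the \<open>j\<close>-th generator are at most as long as the layer of \<open>h_j\<close> itself, so
  a layer length is the number of levels \<open>1 \<le> t \<le> layer_len (j, 0)\<close> containing it.\<close>
lemma layer_len_levels:
  assumes "(j, a) \<in> labels"
  shows "int (layer_len (j, a)) = (\<Sum>t\<in>{1..layer_len (j, replicate m 0)}. if a \<in> level_set j t then 1 else 0)"
proof -
  have "pw_le (replicate m 0) a" using assms
    unfolding labels_def pw_le_def by (auto simp: list_all2_conv_all_nth)
  moreover have "(j, replicate m 0) \<in> labels" using assms by (simp add: labels_def)
  ultimately have "layer_len (j, a) \<le> layer_len (j, replicate m 0)" by (intro layer_len_antitone)
  then have "{t\<in>{1..layer_len (j, replicate m 0)}. a \<in> level_set j t} = {1..layer_len (j, a)}"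
    using assms by (auto simp: level_set_def labels_def)
  then show ?thesis by (simp add: sum.inter_filter[symmetric])
qed

end

section \<open>The Poincar\'e series as a finite sum of shifted products\<close>

text \<open>The shifted product \<open>X^n0 Y^d0 \<Prod>(i \<in> \<alpha>). (1 - X Y^f2(i))^-1\<close> for \<open>r = (\<alpha>, (n0, d0))\<close>.\<close>
definition shifted_geom_prod :: "(nat \<Rightarrow> nat) \<Rightarrow> nat set \<times> (int \<times> int) \<Rightarrow> lseries" where
  "shifted_geom_prod f2 r = (\<lambda>p. geom_prod f2 (fst r) (fst p - fst (snd r), snd p - snd (snd r)))"

lemma int_cone_mult: "int (cone_mult C a) = (\<Sum>cb\<leftarrow>C. if in_cone (fst cb) (snd cb) a then 1 else 0)"
  unfolding cone_mult_def by (induction C) auto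

lemma sum_indicator_card: "finite A \<Longrightarrow> (\<Sum>a\<in>A. if P a then 1 else 0 :: int) = int (card {a\<in>A. P a})"
  by (simp add: sum.inter_filter[symmetric])

lemma sum_lessThan_as_list: "(\<Sum>t<n. g t) = (\<Sum>t\<leftarrow>[0..<n]. g t)"
proof -
  have "{..<n} = set [0..<n]" by auto
  then show ?thesis by (simp only: sum_set_upt_conv_sum_list_nat)
qed

lemma sum_atLeastAtMost_as_list: "(\<Sum>t\<in>{1..n}. g t) = (\<Sum>t\<leftarrow>[1..<Suc n]. g t)"
proof -
  have "{1..n} = set [1..<Suc n]" by auto
  then show ?thesis by (simp only: sum_set_upt_conv_sum_list_nat)
qed

lemma sum_list_map_concat: "(\<Sum>x\<leftarrow>concat xss. f x) = (\<Sum>xs\<leftarrow>xss. \<Sum>x\<leftarrow>xs. f x)"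
  by (induction xss) auto

lemma sum_sum_list_swap: "(\<Sum>a\<in>A. \<Sum>x\<leftarrow>xs. g a x) = (\<Sum>x\<leftarrow>xs. \<Sum>a\<in>A. g a x)"
  by (induction xs) (auto simp: sum.distrib)

context bigraded_module_fl
begin

text \<open>The cone \<open>cb\<close> in the exponents of the \<open>j\<close>-th generator, as a shifted product: a cone
  direction \<open>i \<in> {0..<m}\<close> corresponds to the variable \<open>T_(i+1)\<close>.\<close>
definition cone_term :: "nat \<Rightarrow> nat list \<times> nat set \<Rightarrow> nat set \<times> (int \<times> int)" where
  "cone_term j cb = ((+) 1 ` snd cb, (fst (snd (hs ! j)) + int (sum_list (fst cb)),
                                     snd (snd (hs ! j)) + int (weighted_deg f2 1 (fst cb))))"

lemma cone_term_vars: "snd cb \<subseteq> {..<m} \<Longrightarrow> fst (cone_term j cb) \<subseteq> {1..m}"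
  unfolding cone_term_def by auto

lemma cone_labels_count:
  assumes "j < length hs" "length (fst cb) = m" "snd cb \<subseteq> {..<m}"
  shows "(\<Sum>a\<in>{a. (j, a) \<in> labels_of_deg p}. if in_cone (fst cb) (snd cb) a then 1 else 0)
       = shifted_geom_prod f2 (cone_term j cb) p"
proof -
  have "{a. (j, a) \<in> labels_of_deg p} \<subseteq> snd ` labels_of_deg p" by force
  then have fin: "finite {a. (j, a) \<in> labels_of_deg p}"
    using finite_labels_of_deg finite_subset by blast
  have cone: "{a \<in> {a. (j, a) \<in> labels_of_deg p}. in_cone (fst cb) (snd cb) a} =
      {a. in_cone (fst cb) (snd cb) a \<and> int (sum_list a) = fst p - fst (snd (hs ! j))
          \<and> int (weighted_deg f2 1 a) = snd p - snd (snd (hs ! j))}"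
    using in_cone_length[of "fst cb" "snd cb"] assms(1,2)
    by (auto simp: labels_of_deg_def labels_def label_deg_def prod_eq_iff)
  have "(\<Sum>a\<in>{a. (j, a) \<in> labels_of_deg p}. if in_cone (fst cb) (snd cb) a then 1 else 0)
      = int (card {a \<in> {a. (j, a) \<in> labels_of_deg p}. in_cone (fst cb) (snd cb) a})"
    by (rule sum_indicator_card[OF fin])
  also have "\<dots> = int (card {a. in_cone (fst cb) (snd cb) a \<and> int (sum_list a) = fst p - fst (snd (hs ! j))
                      \<and> int (weighted_deg f2 1 a) = snd p - snd (snd (hs ! j))})"
    by (simp only: cone)
  also have "\<dots> = shifted_geom_prod f2 (cone_term j cb) p"
    unfolding shifted_geom_prod_def cone_term_def using assms(2,3)
    by (subst cone_series) (auto simp: algebra_simps)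
  finally show ?thesis .
qed

lemma component_len_cones:
  assumes CS: "\<And>j t. j < length hs \<Longrightarrow> stanley_decomp m (CS j t) (level_set j t)"
  shows "int (rel_len smul {0} (G p)) =
    (\<Sum>j<length hs. \<Sum>t\<in>{1..layer_len (j, replicate m 0)}. \<Sum>cb\<leftarrow>CS j t. shifted_geom_prod f2 (cone_term j cb) p)"
proof -
  define A where "A j = {a. (j, a) \<in> labels_of_deg p}" for j
  let ?ind = "\<lambda>a cb. if in_cone (fst cb) (snd cb) a then 1 else 0 :: int"
  have labels_Sigma: "labels_of_deg p = Sigma {..<length hs} A"
    unfolding labels_of_deg_def labels_def A_def by auto
  have fin_A: "finite (A j)" for j
  proof -
    have "A j \<subseteq> snd ` labels_of_deg p" unfolding A_def by force
    then show ?thesis using finite_labels_of_deg finite_subset by blast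
  qed
  have "int (rel_len smul {0} (G p)) = (\<Sum>q\<in>labels_of_deg p. int (layer_len q))"
    using component_len_sum[OF fin_len[rule_format, of p]] by simp
  also have "\<dots> = (\<Sum>j<length hs. \<Sum>a\<in>A j. int (layer_len (j, a)))"
    unfolding labels_Sigma by (subst sum.Sigma) (auto simp: fin_A)
  also have "\<dots> = (\<Sum>j<length hs. \<Sum>a\<in>A j. \<Sum>t\<in>{1..layer_len (j, replicate m 0)}. \<Sum>cb\<leftarrow>CS j t. ?ind a cb)"
  proof (intro sum.cong refl)
    fix j a assume j: "j \<in> {..<length hs}" and a: "a \<in> A j"
    then have ja: "(j, a) \<in> labels" by (simp add: A_def labels_of_deg_def)
    then have "int (cone_mult (CS j t) a) = (if a \<in> level_set j t then 1 else 0)" for t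
      using CS[of j t] j unfolding stanley_decomp_def by (simp add: labels_def)
    then show "int (layer_len (j, a)) = (\<Sum>t\<in>{1..layer_len (j, replicate m 0)}. \<Sum>cb\<leftarrow>CS j t. ?ind a cb)"
      using layer_len_levels[OF ja] by (simp add: int_cone_mult)
  qed
  also have "\<dots> = (\<Sum>j<length hs. \<Sum>t\<in>{1..layer_len (j, replicate m 0)}. \<Sum>cb\<leftarrow>CS j t. \<Sum>a\<in>A j. ?ind a cb)"
  proof (intro sum.cong refl)
    fix j
    show "(\<Sum>a\<in>A j. \<Sum>t\<in>{1..layer_len (j, replicate m 0)}. \<Sum>cb\<leftarrow>CS j t. ?ind a cb) =
        (\<Sum>t\<in>{1..layer_len (j, replicate m 0)}. \<Sum>cb\<leftarrow>CS j t. \<Sum>a\<in>A j. ?ind a cb)"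
      by (subst sum.swap) (simp add: sum_sum_list_swap)
  qed
  also have "\<dots> = (\<Sum>j<length hs. \<Sum>t\<in>{1..layer_len (j, replicate m 0)}. \<Sum>cb\<leftarrow>CS j t.
      shifted_geom_prod f2 (cone_term j cb) p)"
  proof (intro sum.cong refl arg_cong[where f = sum_list] map_cong)
    fix j t cb assume "j \<in> {..<length hs}" "cb \<in> set (CS j t)"
    then show "(\<Sum>a\<in>A j. ?ind a cb) = shifted_geom_prod f2 (cone_term j cb) p"
      unfolding A_def using CS[of j t] by (intro cone_labels_count) (auto simp: stanley_decomp_def)
  qed
  finally show ?thesis .
qed

lemma nonzero_module_positive_len:
  assumes "\<exists>x::'b. x \<noteq> 0"
  shows "\<exists>p. 1 \<le> rel_len smul {0} (G p)"
  using assms nonzero_component rel_len_nonzero G_subspace fin_len by blast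

lemma component_len_series:
  "\<exists>R. (\<forall>r\<in>set R. fst r \<subseteq> {1..m}) \<and>
       (\<forall>p. int (rel_len smul {0} (G p)) = (\<Sum>r\<leftarrow>R. shifted_geom_prod f2 r p))"
proof -
  have "\<forall>jt. \<exists>C. fst jt < length hs \<longrightarrow> stanley_decomp m C (level_set (fst jt) (snd jt))"
  proof
    fix jt :: "nat \<times> nat"
    have "level_set (fst jt) (snd jt) \<subseteq> {a. length a = m}" by (auto simp: level_set_def)
    then show "\<exists>C. fst jt < length hs \<longrightarrow> stanley_decomp m C (level_set (fst jt) (snd jt))"
      using stanley_decomposition level_set_downset by blast
  qed
  then obtain CS' where "\<forall>jt. fst jt < length hs \<longrightarrow> stanley_decomp m (CS' jt) (level_set (fst jt) (snd jt))"
    by (rule choice[elim_format]) blast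
  then obtain CS where CS: "\<And>j t. j < length hs \<Longrightarrow> stanley_decomp m (CS j t) (level_set j t)"
    by (intro that[of "\<lambda>j t. CS' (j, t)"]) auto
  define R where "R = concat (map (\<lambda>j. concat (map (\<lambda>t. map (cone_term j) (CS j t))
      [1..<Suc (layer_len (j, replicate m 0))])) [0..<length hs])"
  have "\<forall>r\<in>set R. fst r \<subseteq> {1..m}"
  proof
    fix r assume "r \<in> set R"
    then obtain j t cb where "j < length hs" "cb \<in> set (CS j t)" "r = cone_term j cb"
      unfolding R_def by auto
    then show "fst r \<subseteq> {1..m}" using CS[of j t] cone_term_vars unfolding stanley_decomp_def by blast
  qed
  moreover have "int (rel_len smul {0} (G p)) = (\<Sum>r\<leftarrow>R. shifted_geom_prod f2 r p)" for p
  proof -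
    have "int (rel_len smul {0} (G p)) = (\<Sum>j<length hs. \<Sum>t\<in>{1..layer_len (j, replicate m 0)}.
        \<Sum>cb\<leftarrow>CS j t. shifted_geom_prod f2 (cone_term j cb) p)"
      by (rule component_len_cones[OF CS])
    also have "\<dots> = (\<Sum>r\<leftarrow>R. shifted_geom_prod f2 r p)"
      unfolding R_def sum_lessThan_as_list sum_atLeastAtMost_as_list
      by (simp add: sum_list_map_concat o_def del: upt_Suc)
    finally show ?thesis .
  qed
  ultimately show ?thesis by blast
qed

end

section \<open>Regrouping a sum of shifted products\<close>

lemma sum_list_count_int:
  "(\<Sum>x\<leftarrow>xs. f x :: int) = (\<Sum>x\<in>set xs. int (count_list xs x) * f x)"
proof (induction xs)
  case (Cons y ys)
  have "(\<Sum>x\<in>set (y # ys). int (count_list (y # ys) x) * f x)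
      = (\<Sum>x\<in>insert y (set ys). int (count_list ys x) * f x + (if x = y then f x else 0))"
    by (intro sum.cong) (auto simp: algebra_simps)
  also have "\<dots> = (\<Sum>x\<in>insert y (set ys). int (count_list ys x) * f x) + f y"
    by (simp add: sum.distrib sum.delta)
  also have "(\<Sum>x\<in>insert y (set ys). int (count_list ys x) * f x) = (\<Sum>x\<in>set ys. int (count_list ys x) * f x)"
    by (cases "y \<in> set ys") (auto simp: insert_absorb)
  finally show ?case using Cons by simp
qed simp

text \<open>Collecting the terms of a list of shifted products by their variable set \<open>\<alpha>\<close>: the
  numerator \<open>I_\<alpha>\<close> counts the shifts occurring with \<open>\<alpha>\<close>, and \<open>h\<close> is the largest \<open>card \<alpha>\<close>.\<close>
definition numerators :: "(nat set \<times> (int \<times> int)) list \<Rightarrow> nat set \<Rightarrow> lseries" where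
  "numerators R \<alpha> q = int (count_list R (\<alpha>, q))"

definition max_dim :: "(nat set \<times> (int \<times> int)) list \<Rightarrow> nat" where
  "max_dim R = Max (insert 0 (card ` fst ` set R))"

lemma finite_shifts: "finite {q. (\<alpha>, q) \<in> set R}"
proof -
  have "{q. (\<alpha>, q) \<in> set R} \<subseteq> snd ` set R" by force
  then show ?thesis using finite_subset by blast
qed

lemma numerators_support: "{q. numerators R \<alpha> q \<noteq> 0} = {q. (\<alpha>, q) \<in> set R}"
  unfolding numerators_def by (auto simp: count_list_0_iff)

lemma ls_mult_numerators:
  "ls_mult (numerators R \<alpha>) g p =
     (\<Sum>q\<in>{q. (\<alpha>, q) \<in> set R}. numerators R \<alpha> q * g (fst p - fst q, snd p - snd q))"
proof -
  obtain n d where p: "p = (n, d)" by (cases p)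
  have "ls_mult (numerators R \<alpha>) g p = (\<Sum>q\<in>{q. numerators R \<alpha> q \<noteq> 0 \<and> g (n - fst q, d - snd q) \<noteq> 0}.
      numerators R \<alpha> q * g (n - fst q, d - snd q))"
    unfolding ls_mult_def p by simp
  also have "\<dots> = (\<Sum>q\<in>{q. (\<alpha>, q) \<in> set R}. numerators R \<alpha> q * g (n - fst q, d - snd q))"
  proof (rule sum.mono_neutral_left[OF finite_shifts])
    show "{q. numerators R \<alpha> q \<noteq> 0 \<and> g (n - fst q, d - snd q) \<noteq> 0} \<subseteq> {q. (\<alpha>, q) \<in> set R}"
      using numerators_support by blast
  qed auto
  finally show ?thesis using p by simp
qed

lemma shifted_sum_regroup:
  assumes R: "\<forall>r\<in>set R. fst r \<subseteq> {1..(m::nat)}"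
  shows "(\<Sum>r\<leftarrow>R. shifted_geom_prod f2 r p) =
    (\<Sum>r\<le>max_dim R. \<Sum>\<alpha>\<in>{\<alpha>. \<alpha> \<subseteq> {1..m} \<and> card \<alpha> = r}. ls_mult (numerators R \<alpha>) (geom_prod f2 \<alpha>) p)"
proof -
  define S where "S = {\<alpha>. \<alpha> \<subseteq> {1..m} \<and> card \<alpha> \<le> max_dim R}"
  define X where "X \<alpha> = ls_mult (numerators R \<alpha>) (geom_prod f2 \<alpha>) p" for \<alpha>
  have finite_S: "finite S" unfolding S_def by (rule finite_subset[of _ "Pow {1..m}"]) auto
  have R_S: "fst ` set R \<subseteq> S"
    using R unfolding S_def max_dim_def by (auto intro: Max_ge)
  have "(\<Sum>r\<le>max_dim R. \<Sum>\<alpha>\<in>{\<alpha>. \<alpha> \<subseteq> {1..m} \<and> card \<alpha> = r}. X \<alpha>) =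
      (\<Sum>r\<in>{..max_dim R}. \<Sum>\<alpha>\<in>{\<alpha>\<in>S. card \<alpha> = r}. X \<alpha>)"
    by (intro sum.cong refl) (auto simp: S_def)
  also have "\<dots> = (\<Sum>\<alpha>\<in>S. X \<alpha>)"
    by (rule sum.group) (use finite_S in \<open>auto simp: S_def\<close>)
  also have "\<dots> = (\<Sum>\<alpha>\<in>fst ` set R. X \<alpha>)"
  proof (rule sum.mono_neutral_right[OF finite_S R_S], intro ballI)
    fix \<alpha> assume "\<alpha> \<in> S - fst ` set R"
    then have "{q. (\<alpha>, q) \<in> set R} = {}" by force
    then show "X \<alpha> = 0" unfolding X_def ls_mult_numerators by (simp only: sum.empty)
  qed
  also have "\<dots> = (\<Sum>x\<in>Sigma (fst ` set R) (\<lambda>\<alpha>. {q. (\<alpha>, q) \<in> set R}).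
      numerators R (fst x) (snd x) * shifted_geom_prod f2 (fst x, snd x) p)"
    unfolding X_def ls_mult_numerators shifted_geom_prod_def
    by (subst sum.Sigma) (auto simp: split_def finite_shifts)
  also have "Sigma (fst ` set R) (\<lambda>\<alpha>. {q. (\<alpha>, q) \<in> set R}) = set R" by force
  also have "(\<Sum>x\<in>set R. numerators R (fst x) (snd x) * shifted_geom_prod f2 (fst x, snd x) p)
      = (\<Sum>r\<leftarrow>R. shifted_geom_prod f2 r p)"
    unfolding numerators_def by (simp add: sum_list_count_int)
  finally show ?thesis unfolding X_def by simp
qed

lemma numerators_top_nonzero:
  assumes "\<forall>r\<in>set R. fst r \<subseteq> {1..(m::nat)}" "R \<noteq> []"
  shows "\<exists>\<alpha>. \<alpha> \<subseteq> {1..m} \<and> card \<alpha> = max_dim R \<and> numerators R \<alpha> \<noteq> (\<lambda>_. 0)"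
proof -
  have ne: "card ` fst ` set R \<noteq> {}" using assms(2) by simp
  then have "max_dim R \<in> card ` fst ` set R"
    unfolding max_dim_def using Max_in[OF _ ne] Max_insert[OF _ ne, of 0] by simp
  then obtain \<alpha> where \<alpha>: "max_dim R = card \<alpha>" "\<alpha> \<in> fst ` set R" by (rule imageE)
  obtain r where r: "\<alpha> = fst r" "r \<in> set R" using \<alpha>(2) by blast
  have "count_list R (fst r, snd r) \<noteq> 0" using r(2) by (simp add: count_list_0_iff)
  then have "numerators R \<alpha> (snd r) \<noteq> 0" unfolding numerators_def r(1) by simp
  then have "numerators R \<alpha> \<noteq> (\<lambda>_. 0)" by (auto dest: fun_cong[of _ _ "snd r"])
  moreover have "\<alpha> \<subseteq> {1..m}" using r assms(1) by blast
  ultimately show ?thesis using \<alpha>(1) by (intro exI[of _ \<alpha>]) simp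
qed

theorem mainTheorem18:
  fixes smul :: "'a::comm_ring_1 \<Rightarrow> 'b::ab_group_add \<Rightarrow> 'b"
    and m :: nat
    and T :: "nat \<Rightarrow> 'b \<Rightarrow> 'b"
    and f2 :: "nat \<Rightarrow> nat"
    and G :: "int \<times> int \<Rightarrow> 'b set"
  assumes "poly_module smul m T"
    and "bigraded smul m T f2 G"
    and "finitely_generated smul m T"
    and "\<forall>p. finite_length smul (G p)"
  shows "\<exists>(h::nat) (I :: nat set \<Rightarrow> int \<times> int \<Rightarrow> int).
     (\<forall>\<alpha>. \<alpha> \<subseteq> {1..m} \<and> card \<alpha> \<le> h \<longrightarrow> finite {p. I \<alpha> p \<noteq> 0}) \<and>
     poincare_series smul G =
       (\<lambda>p. \<Sum>r\<le>h. \<Sum>\<alpha>\<in>{\<alpha>. \<alpha> \<subseteq> {1..m} \<and> card \<alpha> = r}. ls_mult (I \<alpha>) (geom_prod f2 \<alpha>) p) \<and>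
     (\<forall>\<alpha>. \<alpha> \<subseteq> {1..m} \<and> card \<alpha> = h \<longrightarrow> (\<forall>p. I \<alpha> p \<ge> 0)) \<and>
     ((\<exists>x::'b. x \<noteq> 0) \<longrightarrow> (\<exists>\<alpha>. \<alpha> \<subseteq> {1..m} \<and> card \<alpha> = h \<and> I \<alpha> \<noteq> (\<lambda>_. 0)))"
proof -
  interpret bigraded_module smul m T f2 G using assms(1,2) by unfold_locales
  obtain hs where "\<forall>hq\<in>set hs. fst hq \<in> G (snd hq)" "gen_submod smul m T (fst ` set hs) = UNIV"
    using homogeneous_generators[OF assms(3)] by blast
  moreover have fin_len: "\<forall>p. rel_finite_len smul {0} (G p)"
    using assms(4) by (simp add: finite_length_eq_rel_finite_len)
  ultimately interpret bigraded_module_fl smul m T f2 G hs by unfold_locales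
  obtain R where R: "\<forall>r\<in>set R. fst r \<subseteq> {1..m}"
      "\<And>p. int (rel_len smul {0} (G p)) = (\<Sum>r\<leftarrow>R. shifted_geom_prod f2 r p)"
    using component_len_series by blast
  have series: "poincare_series smul G = (\<lambda>p. \<Sum>r\<le>max_dim R.
      \<Sum>\<alpha>\<in>{\<alpha>. \<alpha> \<subseteq> {1..m} \<and> card \<alpha> = r}. ls_mult (numerators R \<alpha>) (geom_prod f2 \<alpha>) p)"
    unfolding poincare_series_def mod_length_eq_rel_len R(2) shifted_sum_regroup[OF R(1)] ..
  have "R \<noteq> []" if nonzero: "\<exists>x::'b. x \<noteq> 0"
  proof
    assume "R = []"
    obtain p where "1 \<le> rel_len smul {0} (G p)" using nonzero_module_positive_len[OF nonzero] by blast
    then show False using R(2)[of p] \<open>R = []\<close> by simp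
  qed
  moreover have "finite {q. numerators R \<alpha> q \<noteq> 0}" for \<alpha>
    unfolding numerators_support by (rule finite_shifts)
  moreover have "numerators R \<alpha> q \<ge> 0" for \<alpha> q by (simp add: numerators_def)
  ultimately show ?thesis using series numerators_top_nonzero[OF R(1)]
    by (intro exI[of _ "max_dim R"] exI[of _ "numerators R"]) blast
qed

end
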